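(* For every constructor rewrite system $R$ over a signature $\Sigma$, every term $t$ over $\Sigma$ and every natural number $n$, the following two conditions are equivalent: (1) $t\rightarrow^n u$ in $R$, where $u$ is in normal form; (2) $\mathcal{G}(t)\rightarrow^n G$ in the constructor graph rewrite system corresponding to $R$, where $G$ is in normal form and $\mathcal{T}(G)=u$.
   Context: A constructor rewrite system over $\Sigma$ (symbols are constructors or function symbols, each with an arity) is a set of rules $\mathbf{f}(p_1,\dots,p_n)\rightarrow t$, $\mathbf{f}$ a function symbol, $p_i$ patterns (built from constructors and variables), $t$ built from constructors, function symbols and variables; it is assumed orthogonal (left-hand sides linear and pairwise non-overlapping), and rewriting is call-by-value: a step replaces anywhere a subterm $l\sigma$ by $r\sigma$ with $l\rightarrow r$ a rule and $\sigma$ mapping variables to constructor terms (closed terms built from constructors only). Normal form = no step applies. A labelled graph over $\Sigma$ is a triple $(V,\alpha,\delta)$: $V$ a finite set of vertices, $\alpha:V\to V^*$ giving the ordered successors of each vertex, $\delta:V\rightharpoonup\Sigma$ a partial labelling, with the length of $\alpha(v)$ equal to the arity of $\delta(v)$ if $\delta(v)$ is defined and $0$ otherwise, and the induced directed graph acyclic. It is closed if $\delta$ is total. A term graph is a labelled graph with a distinguished root vertex. A homomorphism $\varphi$ of labelled graphs satisfies $\delta_H(\varphi(v))=\delta_G(v)$ and $\alpha_H(\varphi(v))=\varphi^*(\alpha_G(v))$ for all $v$ in the domain of $\delta_G$; for term graphs it also maps root to root. Term graphs are considered up to isomorphism. A path $v_1,\dots,v_n$ is a constructor path if every $\delta(v_i)$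 is a constructor; a pattern path if every $\delta(v_i)$ is a constructor or undefined; a left path if $n\ge1$, $\delta(v_1)$ is a function symbol and $v_2,\dots,v_n$ is a pattern path. A graph rewrite rule is a triple $(H,r,s)$ with $H$ a labelled graph and $r,s$ vertices such that every path starting at $r$ is a left path. For a vertex $v$, $H|_v$ is the term graph of vertices reachable from $v$, root $v$. A redex in a term graph $G$ is a rule $(H,r,s)$ with a homomorphism $\varphi:H|_r\to G$ such that for every vertex $v$ of $H|_r$ with undefined label, every path in $G$ starting at $\varphi(v)$ is a constructor path. Firing it: (build) add to $G$ a fresh copy of the vertices of $H$ reachable from $s$ but not from $r$, with labels and successor lists as in $H$, successors lying in $H|_r$ being replaced by their $\varphi$-images; let $s'$ be the copy of $s$ (or $\varphi(s)$ if $s$ is reachable from $r$); (redirection) redirect every edge pointing to $\varphi(r)$ to $s'$, and if $\varphi(r)$ was the root, $s'$ becomes the root; (garbage collection) remove vertices not reachable from the root. The result $I$ is written $G\rightarrow I$. A term graph is in normal form if it has no redex. $\mathcal{G}(t)$ is the tree term graph with one vertex per symbol occurrence of $t$ labelled by that symbol, variable occurrences being unlabelled vertices annotated with their variable, rooted at the head symbol. $\mathcal{T}(G)$ is the term obtained by unfolding the term graph $G$ from its root (unlabelled vertices read as their variables). A rule $l\rightarrow r$ of $R$ corresponds to the graph rewrite rule obtained from the disjoint union of the trees of $l$ and $r$ by identifying the vertices representing the same variable, with left root the root of $l$ and right root the root of $r$. The constructor graph rewrite system corresponding to $R$ is the set of graph rewrite rules corresponding to the rules of $R$. *)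

theory Defs
  imports Main "HOL-Library.Countable"
begin

text \<open>A signature is given by a predicate con (which symbols are constructors;
 the others are function symbols) and an arity function ar.\<close>

datatype ('f, 'x) trm = Var 'x | Fun 'f "('f, 'x) trm list"

fun wf_trm :: "('f \<Rightarrow> nat) \<Rightarrow> ('f, 'x) trm \<Rightarrow> bool" where
  "wf_trm ar (Var x) = True"
| "wf_trm ar (Fun f ts) = (length ts = ar f \<and> (\<forall>t\<in>set ts. wf_trm ar t))"

fun vars :: "('f, 'x) trm \<Rightarrow> 'x set" where
  "vars (Var x) = {x}"
| "vars (Fun f ts) = (\<Union>t\<in>set ts. vars t)"

fun funs :: "('f, 'x) trm \<Rightarrow> 'f set" where
  "funs (Var x) = {}"
| "funs (Fun f ts) = insert f (\<Union>t\<in>set ts. funs t)"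

definition constr_term :: "('f \<Rightarrow> bool) \<Rightarrow> ('f, 'x) trm \<Rightarrow> bool" where
  "constr_term con t \<longleftrightarrow> vars t = {} \<and> (\<forall>f\<in>funs t. con f)"

definition pattern :: "('f \<Rightarrow> bool) \<Rightarrow> ('f \<Rightarrow> nat) \<Rightarrow> ('f, 'x) trm \<Rightarrow> bool" where
  "pattern con ar t \<longleftrightarrow> wf_trm ar t \<and> (\<forall>f\<in>funs t. con f)"

fun subst :: "('x \<Rightarrow> ('f, 'y) trm) \<Rightarrow> ('f, 'x) trm \<Rightarrow> ('f, 'y) trm" where
  "subst \<sigma> (Var x) = \<sigma> x"
| "subst \<sigma> (Fun f ts) = Fun f (map (subst \<sigma>) ts)"

fun valid_pos :: "('f, 'x) trm \<Rightarrow> nat list \<Rightarrow> bool" where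
  "valid_pos t [] = True"
| "valid_pos (Var x) (i # p) = False"
| "valid_pos (Fun f ts) (i # p) = (i < length ts \<and> valid_pos (ts ! i) p)"

definition poss :: "('f, 'x) trm \<Rightarrow> nat list set" where
  "poss t = {p. valid_pos t p}"

fun subt :: "('f, 'x) trm \<Rightarrow> nat list \<Rightarrow> ('f, 'x) trm" where
  "subt t [] = t"
| "subt (Var x) (i # p) = Var x"
| "subt (Fun f ts) (i # p) = subt (ts ! i) p"

fun replace :: "('f, 'x) trm \<Rightarrow> nat list \<Rightarrow> ('f, 'x) trm \<Rightarrow> ('f, 'x) trm" where
  "replace t [] s = s"
| "replace (Var x) (i # p) s = Var x"
| "replace (Fun f ts) (i # p) s = Fun f (ts[i := replace (ts ! i) p s])"

definition linear_trm :: "('f, 'x) trm \<Rightarrow> bool" where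
  "linear_trm t \<longleftrightarrow> (\<forall>p q x. p \<in> poss t \<longrightarrow> q \<in> poss t \<longrightarrow>
       subt t p = Var x \<longrightarrow> subt t q = Var x \<longrightarrow> p = q)"

text \<open>Non-overlapping left-hand sides (variables of different rules renamed apart,
  i.e. independent substitutions).\<close>
definition non_overlapping :: "(('f, 'x) trm \<times> ('f, 'x) trm) set \<Rightarrow> bool" where
  "non_overlapping R \<longleftrightarrow> (\<forall>l1 r1 l2 r2 p (\<sigma>1 :: 'x \<Rightarrow> ('f, 'x) trm) (\<sigma>2 :: 'x \<Rightarrow> ('f, 'x) trm).
     (l1, r1) \<in> R \<longrightarrow> (l2, r2) \<in> R \<longrightarrow> p \<in> poss l1 \<longrightarrow> (\<forall>x. subt l1 p \<noteq> Var x) \<longrightarrow>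
     subst \<sigma>1 (subt l1 p) = subst \<sigma>2 l2 \<longrightarrow> p = [] \<and> (l1, r1) = (l2, r2))"

definition constructor_trs ::
  "('f \<Rightarrow> bool) \<Rightarrow> ('f \<Rightarrow> nat) \<Rightarrow> (('f, 'x) trm \<times> ('f, 'x) trm) set \<Rightarrow> bool" where
  "constructor_trs con ar R \<longleftrightarrow>
     (\<forall>(l, r) \<in> R. (\<exists>f ps. l = Fun f ps \<and> \<not> con f \<and> length ps = ar f \<and>
                          (\<forall>p\<in>set ps. pattern con ar p))
                 \<and> wf_trm ar r \<and> vars r \<subseteq> vars l \<and> linear_trm l)
     \<and> non_overlapping R"

definition cbv_step ::
  "('f \<Rightarrow> bool) \<Rightarrow> (('f, 'x) trm \<times> ('f, 'x) trm) set \<Rightarrow> ('f, 'x) trm \<Rightarrow> ('f, 'x) trm \<Rightarrow> bool" where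
  "cbv_step con R t t' \<longleftrightarrow> (\<exists>l r p \<sigma>. (l, r) \<in> R \<and> p \<in> poss t \<and>
       (\<forall>x\<in>vars l. constr_term con (\<sigma> x)) \<and>
       subt t p = subst \<sigma> l \<and> t' = replace t p (subst \<sigma> r))"

definition term_NF :: "('f \<Rightarrow> bool) \<Rightarrow> (('f, 'x) trm \<times> ('f, 'x) trm) set \<Rightarrow> ('f, 'x) trm \<Rightarrow> bool" where
  "term_NF con R u \<longleftrightarrow> \<not> (\<exists>u'. cbv_step con R u u')"

text \<open>Term graphs over vertices of type nat. lab is the partial labelling delta,
 succ the successor lists alpha; varof annotates unlabelled vertices with variables.\<close>
record ('f, 'x) tgraph =
  verts :: "nat set"
  succ :: "nat \<Rightarrow> nat list"
  lab :: "nat \<Rightarrow> 'f option"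
  varof :: "nat \<Rightarrow> 'x option"
  root :: nat

definition edges :: "('v \<Rightarrow> 'v list) \<Rightarrow> ('v \<times> 'v) set" where
  "edges \<alpha> = {(a, b). b \<in> set (\<alpha> a)}"

definition reach :: "('v \<Rightarrow> 'v list) \<Rightarrow> 'v \<Rightarrow> 'v set" where
  "reach \<alpha> v = {w. (v, w) \<in> (edges \<alpha>)\<^sup>*}"

definition wf_lgraph :: "('f \<Rightarrow> nat) \<Rightarrow> 'v set \<Rightarrow> ('v \<Rightarrow> 'v list) \<Rightarrow> ('v \<Rightarrow> 'f option) \<Rightarrow> bool" where
  "wf_lgraph ar V \<alpha> \<delta> \<longleftrightarrow> finite V \<and>
     (\<forall>v\<in>V. set (\<alpha> v) \<subseteq> V \<and> length (\<alpha> v) = (case \<delta> v of Some f \<Rightarrow> ar f | None \<Rightarrow> 0)) \<and>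
     acyclic (edges \<alpha> \<inter> (V \<times> V))"

definition is_path :: "('f, 'x) tgraph \<Rightarrow> nat list \<Rightarrow> bool" where
  "is_path G vs \<longleftrightarrow> vs \<noteq> [] \<and> set vs \<subseteq> verts G \<and>
     (\<forall>i. Suc i < length vs \<longrightarrow> vs ! Suc i \<in> set (succ G (vs ! i)))"

definition constructor_path :: "('f \<Rightarrow> bool) \<Rightarrow> ('f, 'x) tgraph \<Rightarrow> nat list \<Rightarrow> bool" where
  "constructor_path con G vs \<longleftrightarrow> (\<forall>w\<in>set vs. \<exists>c. lab G w = Some c \<and> con c)"

record ('w, 'f) grule =
  gV :: "'w set"
  gsucc :: "'w \<Rightarrow> 'w list"
  glab :: "'w \<Rightarrow> 'f option"
  lroot :: 'w
  rroot :: 'w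

definition is_redex ::
  "('f \<Rightarrow> bool) \<Rightarrow> ('w, 'f) grule \<Rightarrow> ('w \<Rightarrow> nat) \<Rightarrow> ('f, 'x) tgraph \<Rightarrow> bool" where
  "is_redex con H \<phi> G \<longleftrightarrow>
     (\<forall>v\<in>reach (gsucc H) (lroot H). \<phi> v \<in> verts G) \<and>
     (\<forall>v\<in>reach (gsucc H) (lroot H). \<forall>f. glab H v = Some f \<longrightarrow>
         lab G (\<phi> v) = Some f \<and> succ G (\<phi> v) = map \<phi> (gsucc H v)) \<and>
     (\<forall>v\<in>reach (gsucc H) (lroot H). glab H v = None \<longrightarrow>
         (\<forall>vs. is_path G vs \<and> hd vs = \<phi> v \<longrightarrow> constructor_path con G vs))"

definition new_part :: "('w, 'f) grule \<Rightarrow> 'w set" where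
  "new_part H = reach (gsucc H) (rroot H) - reach (gsucc H) (lroot H)"

text \<open>iota chooses the fresh copies of the vertices to be built.\<close>
definition fresh_for :: "('w, 'f) grule \<Rightarrow> ('w \<Rightarrow> nat) \<Rightarrow> ('f, 'x) tgraph \<Rightarrow> bool" where
  "fresh_for H \<iota> G \<longleftrightarrow> inj_on \<iota> (new_part H) \<and> \<iota> ` new_part H \<inter> verts G = {}"

definition fire ::
  "('w, 'f) grule \<Rightarrow> ('w \<Rightarrow> nat) \<Rightarrow> ('w \<Rightarrow> nat) \<Rightarrow> ('f, 'x) tgraph \<Rightarrow> ('f, 'x) tgraph" where
  "fire H \<phi> \<iota> G =
    (let N = new_part H;
         \<psi> = (\<lambda>w. if w \<in> reach (gsucc H) (lroot H) then \<phi> w else \<iota> w);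
         isnew = (\<lambda>v. \<exists>w\<in>N. \<iota> w = v);
         pre = (\<lambda>v. THE w. w \<in> N \<and> \<iota> w = v);
         s' = \<psi> (rroot H);
         rd = (\<lambda>v. if v = \<phi> (lroot H) then s' else v);
         \<comment> \<open>build\<close>
         succ1 = (\<lambda>v. if isnew v then map \<psi> (gsucc H (pre v)) else succ G v);
         lab1 = (\<lambda>v. if isnew v then glab H (pre v) else lab G v);
         var1 = (\<lambda>v. if isnew v then None else varof G v);
         \<comment> \<open>redirection\<close>
         succ2 = (\<lambda>v. map rd (succ1 v));
         root2 = rd (root G)
     in \<comment> \<open>garbage collection\<close>
       \<lparr> verts = reach succ2 root2, succ = succ2, lab = lab1, varof = var1, root = root2 \<rparr>)"

definition varpos :: "('f, 'x) trm \<Rightarrow> 'x \<Rightarrow> nat list" where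
  "varpos l x = (SOME p. p \<in> poss l \<and> subt l p = Var x)"

text \<open>Vertices (False, p): positions p of the left-hand side; (True, p): non-variable
 positions of the right-hand side; variable occurrences of the right-hand side are
 identified with the (unique, by linearity) occurrence of the variable in the left-hand side.\<close>
definition rnode :: "('f, 'x) trm \<Rightarrow> ('f, 'x) trm \<Rightarrow> nat list \<Rightarrow> bool \<times> nat list" where
  "rnode l r p = (case subt r p of Var x \<Rightarrow> (False, varpos l x) | Fun f ts \<Rightarrow> (True, p))"

definition rule_graph :: "('f, 'x) trm \<Rightarrow> ('f, 'x) trm \<Rightarrow> (bool \<times> nat list, 'f) grule" where
  "rule_graph l r =
    \<lparr> gV = {(False, p) | p. p \<in> poss l} \<union> {(True, p) | p. p \<in> poss r \<and> (\<forall>x. subt r p \<noteq> Var x)},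
      gsucc = (\<lambda>(b, p). if b then
                   (case subt r p of Fun f ts \<Rightarrow> map (\<lambda>i. rnode l r (p @ [i])) [0..<length ts] | Var x \<Rightarrow> [])
                 else
                   (case subt l p of Fun f ts \<Rightarrow> map (\<lambda>i. (False, p @ [i])) [0..<length ts] | Var x \<Rightarrow> [])),
      glab = (\<lambda>(b, p). case subt (if b then r else l) p of Fun f ts \<Rightarrow> Some f | Var x \<Rightarrow> None),
      lroot = (False, []),
      rroot = rnode l r [] \<rparr>"

definition gstep ::
  "('f \<Rightarrow> bool) \<Rightarrow> (('f, 'x) trm \<times> ('f, 'x) trm) set \<Rightarrow> ('f, 'x) tgraph \<Rightarrow> ('f, 'x) tgraph \<Rightarrow> bool" where
  "gstep con R G G' \<longleftrightarrow> (\<exists>l r \<phi> \<iota>. (l, r) \<in> R \<and> is_redex con (rule_graph l r) \<phi> G \<and>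
       fresh_for (rule_graph l r) \<iota> G \<and> G' = fire (rule_graph l r) \<phi> \<iota> G)"

definition graph_NF ::
  "('f \<Rightarrow> bool) \<Rightarrow> (('f, 'x) trm \<times> ('f, 'x) trm) set \<Rightarrow> ('f, 'x) tgraph \<Rightarrow> bool" where
  "graph_NF con R G \<longleftrightarrow> \<not> (\<exists>l r \<phi>. (l, r) \<in> R \<and> is_redex con (rule_graph l r) \<phi> G)"

text \<open>The tree term graph of a term; vertices are positions, encoded injectively as nats.\<close>
definition graph_of :: "('f, 'x) trm \<Rightarrow> ('f, 'x) tgraph" where
  "graph_of t =
    \<lparr> verts = to_nat ` poss t,
      succ = (\<lambda>v. if v \<in> to_nat ` poss t then
                (case subt t (from_nat v) of
                   Fun f ts \<Rightarrow> map (\<lambda>i. to_nat (from_nat v @ [i])) [0..<length ts]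
                 | Var x \<Rightarrow> [])
              else []),
      lab = (\<lambda>v. if v \<in> to_nat ` poss t then
                (case subt t (from_nat v) of Fun f ts \<Rightarrow> Some f | Var x \<Rightarrow> None) else None),
      varof = (\<lambda>v. if v \<in> to_nat ` poss t then
                (case subt t (from_nat v) of Fun f ts \<Rightarrow> None | Var x \<Rightarrow> Some x) else None),
      root = to_nat ([] :: nat list) \<rparr>"

text \<open>Unfolding with fuel; for an acyclic finite graph, fuel card V + 1 suffices.\<close>
fun unfold_tg :: "('f, 'x) tgraph \<Rightarrow> nat \<Rightarrow> nat \<Rightarrow> ('f, 'x) trm" where
  "unfold_tg G 0 v = undefined"
| "unfold_tg G (Suc k) v =
     (case lab G v of Some f \<Rightarrow> Fun f (map (unfold_tg G k) (succ G v))
                    | None \<Rightarrow> Var (the (varof G v)))"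

definition term_of :: "('f, 'x) tgraph \<Rightarrow> ('f, 'x) trm" where
  "term_of G = unfold_tg G (Suc (card (verts G))) (root G)"

end

theory Submission
  imports Defs
begin

text \<open>
  Say that a term graph represents a term \<open>t\<close> if it is finite and garbage free, its root
  unfolds to \<open>t\<close>, and every vertex denoting a term that is not a constructor term has at most
  one incoming edge, and is not the root if it has one. In such a graph the walk from the root to a
  vertex denoting a non-value is unique. Under call-by-value the variables of a left-hand side
  are matched by values and a redex is never a value, so a graph redex occurs exactly once in
  the unfolding, and firing it rewrites exactly that occurrence; the right-hand side built by
  the step shares only the value subgraphs matched by variables, so the invariant is preserved.
  Rewrite steps and graph rewrite steps therefore simulate each other, normal forms coincide,
  and the theorem follows by induction on the number of steps, starting from the tree of \<open>t\<close>.
\<close>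

lemma valid_pos_append: "valid_pos t (p @ q) \<longleftrightarrow> valid_pos t p \<and> valid_pos (subt t p) q"
  by (induction t p rule: valid_pos.induct) auto

lemma subt_append: "valid_pos t p \<Longrightarrow> subt t (p @ q) = subt (subt t p) q"
  by (induction t p rule: valid_pos.induct) auto

lemma valid_pos_single: "valid_pos t [i] \<longleftrightarrow> (\<exists>g ts. t = Fun g ts \<and> i < length ts)"
  by (cases t) auto

lemma subt_snoc: "valid_pos t (q @ [i]) \<Longrightarrow>
    \<exists>g ts. subt t q = Fun g ts \<and> i < length ts \<and> subt t (q @ [i]) = ts ! i"
proof -
  assume a: "valid_pos t (q @ [i])"
  then have 1: "valid_pos t q" "valid_pos (subt t q) [i]"
    using valid_pos_append[of t q "[i]"] by simp_all
  then obtain g ts where 2: "subt t q = Fun g ts" "i < length ts"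
    using valid_pos_single[of "subt t q" i] by auto
  have "subt t (q @ [i]) = subt (subt t q) [i]" using subt_append[OF 1(1)] by simp
  then show ?thesis using 2 by simp
qed

lemma poss_snoc_Fun: "q \<in> poss t \<Longrightarrow> subt t q = Fun f ts \<Longrightarrow> i < length ts \<Longrightarrow>
    q @ [i] \<in> poss t \<and> subt t (q @ [i]) = ts ! i"
  by (simp add: poss_def valid_pos_append subt_append)

lemma subt_subst: "valid_pos l p \<Longrightarrow> valid_pos (subst \<sigma> l) p \<and> subt (subst \<sigma> l) p = subst \<sigma> (subt l p)"
  by (induction l p rule: valid_pos.induct) auto

lemma subst_cong: "(\<forall>x\<in>vars t. \<sigma>1 x = \<sigma>2 x) \<Longrightarrow> subst \<sigma>1 t = subst \<sigma>2 t"
  by (induction t) auto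

lemma size_nth_less_Fun: "i < length ts \<Longrightarrow> size (ts ! i) < size (Fun f ts)"
  using size_list_estimation'[of "ts ! i" ts "size (ts ! i)" size] by (simp add: nth_mem)

lemma size_subt_le: "valid_pos t p \<Longrightarrow> size (subt t p) \<le> size t"
proof (induction t p rule: valid_pos.induct)
  case (3 f ts i p)
  then show ?case using size_nth_less_Fun[of i ts f] by simp
qed auto

lemma constr_term_Fun: "constr_term con (Fun f ts) \<longleftrightarrow> con f \<and> (\<forall>t\<in>set ts. constr_term con t)"
  by (auto simp: constr_term_def)

lemma not_constr_term_Var: "\<not> constr_term con (Var x)"
  by (auto simp: constr_term_def)

lemma constr_term_subt: "constr_term con t \<Longrightarrow> valid_pos t p \<Longrightarrow> constr_term con (subt t p)"
  by (induction t p rule: valid_pos.induct) (auto simp: constr_term_Fun not_constr_term_Var)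

lemma poss_Fun_cases: "p \<in> poss (Fun f ts) \<Longrightarrow> p = [] \<or>
    (\<exists>i q. p = i # q \<and> i < length ts \<and> q \<in> poss (ts ! i))"
  by (cases p) (auto simp: poss_def)

lemma finite_poss: "finite (poss t)"
proof (induction t)
  case (Var x)
  have "poss (Var x) \<subseteq> {[]}" by (auto simp: poss_def elim: valid_pos.elims)
  then show ?case using finite_subset by blast
next
  case (Fun f ts)
  have "poss (Fun f ts) \<subseteq> insert [] (\<Union>i<length ts. (Cons i) ` poss (ts ! i))"
    using poss_Fun_cases by fastforce
  moreover have "finite (\<Union>i<length ts. (Cons i) ` poss (ts ! i))"
    using Fun by (auto simp: nth_mem)
  ultimately show ?case by (meson finite_insert finite_subset)
qed

lemma vars_imp_pos: "x \<in> vars t \<Longrightarrow> \<exists>p. valid_pos t p \<and> subt t p = Var x"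
proof (induction t)
  case (Var y)
  then show ?case by (intro exI[of _ "[]"]) simp
next
  case (Fun f ts)
  then obtain t' where t': "t' \<in> set ts" "x \<in> vars t'" by auto
  then obtain i where i: "i < length ts" "ts ! i = t'" by (auto simp: in_set_conv_nth)
  obtain p where "valid_pos t' p" "subt t' p = Var x" using Fun.IH t' by blast
  then show ?case using i by (intro exI[of _ "i # p"]) auto
qed

lemma pos_imp_vars: "valid_pos t p \<Longrightarrow> subt t p = Var x \<Longrightarrow> x \<in> vars t"
  by (induction t p rule: valid_pos.induct) (auto simp: nth_mem)

lemma subt_varpos: "x \<in> vars l \<Longrightarrow> varpos l x \<in> poss l \<and> subt l (varpos l x) = Var x"
  unfolding varpos_def poss_def
    using vars_imp_pos[of x l] by (metis (mono_tags, lifting) mem_Collect_eq someI_ex)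

lemma varpos_linear: "linear_trm l \<Longrightarrow> q \<in> poss l \<Longrightarrow> subt l q = Var x \<Longrightarrow> varpos l x = q"
  using subt_varpos[of x l] pos_imp_vars[of l q x] unfolding linear_trm_def poss_def by auto

fun walk :: "('f, 'x) tgraph \<Rightarrow> nat \<Rightarrow> nat list \<Rightarrow> nat option" where
  "walk G v [] = Some v"
| "walk G v (i # q) = (if i < length (succ G v) then walk G (succ G v ! i) q else None)"

lemma walk_append: "walk G v (p @ q) = (case walk G v p of None \<Rightarrow> None | Some u \<Rightarrow> walk G u q)"
  by (induction p arbitrary: v) auto

lemma walk_append_Some: "walk G v p = Some u \<Longrightarrow> walk G v (p @ q) = walk G u q"
  by (simp add: walk_append)

lemma walk_snoc: "walk G v (p @ [i]) = Some u \<longleftrightarrow>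
   (\<exists>x. walk G v p = Some x \<and> i < length (succ G x) \<and> succ G x ! i = u)"
  by (auto simp: walk_append split: option.splits)

lemma reach_iff_walk: "u \<in> reach (succ G) v \<longleftrightarrow> (\<exists>q. walk G v q = Some u)"
proof
  assume "u \<in> reach (succ G) v"
  then have "(v, u) \<in> (edges (succ G))\<^sup>*" by (simp add: reach_def)
  then show "\<exists>q. walk G v q = Some u"
  proof (induction rule: rtrancl_induct)
    case base
    then show ?case by (rule exI[of _ "[]"]) simp
  next
    case (step a b)
    then obtain q where q: "walk G v q = Some a" by blast
    from step(2) have "b \<in> set (succ G a)" by (simp add: edges_def)
    then obtain i where "i < length (succ G a)" "succ G a ! i = b" by (auto simp: in_set_conv_nth)
    then have "walk G v (q @ [i]) = Some b" using q by (auto simp: walk_snoc)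
    then show ?case by blast
  qed
next
  assume "\<exists>q. walk G v q = Some u"
  then obtain q where "walk G v q = Some u" by blast
  then have "(v, u) \<in> (edges (succ G))\<^sup>*"
  proof (induction q arbitrary: v)
    case Nil
    then show ?case by simp
  next
    case (Cons i q)
    then have i: "i < length (succ G v)" and w: "walk G (succ G v ! i) q = Some u"
      by (auto split: if_splits)
    have "(v, succ G v ! i) \<in> edges (succ G)" using i by (simp add: edges_def)
    with Cons.IH[OF w] show ?case by (meson converse_rtrancl_into_rtrancl)
  qed
  then show "u \<in> reach (succ G) v" by (simp add: reach_def)
qed

lemma reach_succ_subset: "i < length (succ G v) \<Longrightarrow> reach (succ G) (succ G v ! i) \<subseteq> reach (succ G) v"
  by (auto simp: reach_def edges_def intro: converse_rtrancl_into_rtrancl[rotated] nth_mem)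

section \<open>Vertices denoting terms\<close>

inductive denotes :: "('f, 'x) tgraph \<Rightarrow> nat \<Rightarrow> ('f, 'x) trm \<Rightarrow> bool" for G where
  denotes_Var: "lab G v = None \<Longrightarrow> varof G v = Some x \<Longrightarrow> succ G v = [] \<Longrightarrow> denotes G v (Var x)"
| denotes_Fun: "lab G v = Some f \<Longrightarrow> length ts = length (succ G v) \<Longrightarrow>
     (\<forall>i<length ts. denotes G (succ G v ! i) (ts ! i)) \<Longrightarrow> denotes G v (Fun f ts)"

lemma denotes_functional: "denotes G v s \<Longrightarrow> denotes G v s' \<Longrightarrow> s = s'"
proof (induction arbitrary: s' rule: denotes.induct)
  case (denotes_Var v x)
  then show ?case by (auto elim: denotes.cases)
next
  case (denotes_Fun v f ts)
  from denotes_Fun.prems obtain ts' where s': "s' = Fun f ts'" "length ts' = length (succ G v)"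
    "\<forall>i<length ts'. denotes G (succ G v ! i) (ts' ! i)"
    using denotes_Fun.hyps(1) by (auto elim: denotes.cases)
  have "ts = ts'"
    by (rule nth_equalityI) (use denotes_Fun s' in auto)
  then show ?case using s' by simp
qed

lemma denotes_FunD: "denotes G v (Fun f ts) \<Longrightarrow> lab G v = Some f \<and> length ts = length (succ G v) \<and>
     (\<forall>i<length ts. denotes G (succ G v ! i) (ts ! i))"
  by (auto elim: denotes.cases)

lemma denotes_VarD: "denotes G v (Var x) \<Longrightarrow> lab G v = None \<and> varof G v = Some x \<and> succ G v = []"
  by (auto elim: denotes.cases)

lemma denotes_walk: "denotes G v t \<Longrightarrow> walk G v q = Some u \<Longrightarrow> valid_pos t q \<and> denotes G u (subt t q)"
proof (induction q arbitrary: v t)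
  case Nil
  then show ?case by simp
next
  case (Cons i q)
  then have i: "i < length (succ G v)" and w: "walk G (succ G v ! i) q = Some u"
    by (auto split: if_splits)
  show ?case
  proof (cases t)
    case (Var x)
    then show ?thesis using Cons.prems i by (auto dest: denotes_VarD)
  next
    case (Fun f ts)
    then have "length ts = length (succ G v)" "denotes G (succ G v ! i) (ts ! i)"
      using denotes_FunD Cons.prems i by metis+
    with Cons.IH[OF this(2) w] i Fun show ?thesis by simp
  qed
qed

lemma denotes_walk_exists: "denotes G v t \<Longrightarrow> valid_pos t q \<Longrightarrow> \<exists>u. walk G v q = Some u"
proof (induction q arbitrary: v t)
  case Nil
  then show ?case by simp
next
  case (Cons i q)
  then obtain f ts where t: "t = Fun f ts" and i: "i < length ts" and vp: "valid_pos (ts ! i) q"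
    by (cases t) auto
  then have "length ts = length (succ G v)" "denotes G (succ G v ! i) (ts ! i)"
    using denotes_FunD Cons.prems by metis+
  with Cons.IH[OF this(2) vp] i show ?case by simp
qed

text \<open>A vertex denoting a finite term lies on no cycle, since a cycle through it would make the
  term a proper subterm of itself.\<close>
lemma denotes_child_not_reach_parent:
  assumes rv: "denotes G v (Fun f ts)" and i: "i < length (succ G v)"
  shows "v \<notin> reach (succ G) (succ G v ! i)"
proof
  assume "v \<in> reach (succ G) (succ G v ! i)"
  then obtain q where "walk G (succ G v ! i) q = Some v" by (auto simp: reach_iff_walk)
  moreover have "denotes G (succ G v ! i) (ts ! i)" "i < length ts" using denotes_FunD[OF rv] i by auto
  ultimately have q: "valid_pos (ts ! i) q" "denotes G v (subt (ts ! i) q)" using denotes_walk by metis+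
  then have "Fun f ts = subt (ts ! i) q" using denotes_functional rv by metis
  then have "size (Fun f ts) \<le> size (ts ! i)" using size_subt_le q(1) by metis
  then show False using size_nth_less_Fun[OF \<open>i < length ts\<close>] by simp
qed

lemma unfold_tg_denotes: "denotes G v t \<Longrightarrow> finite (reach (succ G) v) \<Longrightarrow> card (reach (succ G) v) < k \<Longrightarrow>
   unfold_tg G k v = t"
proof (induction arbitrary: k rule: denotes.induct)
  case (denotes_Var v x)
  then show ?case by (cases k) auto
next
  case (denotes_Fun v f ts)
  then obtain k' where k: "k = Suc k'" by (cases k) auto
  have rv: "denotes G v (Fun f ts)" using denotes_Fun by (intro denotes.denotes_Fun) auto
  have "map (unfold_tg G k') (succ G v) = ts"
  proof (rule nth_equalityI)
    fix i assume "i < length (map (unfold_tg G k') (succ G v))"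
    then have i: "i < length (succ G v)" by simp
    let ?c = "succ G v ! i"
    have "v \<in> reach (succ G) v" by (simp add: reach_def)
    then have sub: "reach (succ G) ?c \<subset> reach (succ G) v"
      using reach_succ_subset[OF i] denotes_child_not_reach_parent[OF rv i] by blast
    have "card (reach (succ G) ?c) < k'"
      using psubset_card_mono[OF denotes_Fun.prems(1) sub] denotes_Fun.prems(2) k by simp
    moreover have "finite (reach (succ G) ?c)"
      using sub denotes_Fun.prems(1) finite_subset by blast
    ultimately show "map (unfold_tg G k') (succ G v) ! i = ts ! i"
      using denotes_Fun i by auto
  qed (use denotes_Fun.hyps in simp)
  then show ?case using k denotes_Fun.hyps(1) by simp
qed

section \<open>Term graphs sharing only values\<close>

definition inedges :: "('f, 'x) tgraph \<Rightarrow> nat \<Rightarrow> (nat \<times> nat) set" where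
  "inedges G u = {(v, i). v \<in> verts G \<and> i < length (succ G v) \<and> succ G v ! i = u}"

definition nonvalues_unshared :: "('f \<Rightarrow> bool) \<Rightarrow> ('f, 'x) tgraph \<Rightarrow> bool" where
  "nonvalues_unshared con G \<longleftrightarrow> (\<forall>u s v i. u \<in> verts G \<longrightarrow> denotes G u s \<longrightarrow> \<not> constr_term con s \<longrightarrow>
      (v, i) \<in> inedges G u \<longrightarrow> u \<noteq> root G \<and> (\<forall>v' i'. (v', i') \<in> inedges G u \<longrightarrow> v' = v \<and> i' = i))"

definition represents :: "('f \<Rightarrow> bool) \<Rightarrow> ('f, 'x) tgraph \<Rightarrow> ('f, 'x) trm \<Rightarrow> bool" where
  "represents con G t \<longleftrightarrow> finite (verts G) \<and> verts G = reach (succ G) (root G) \<and>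
     denotes G (root G) t \<and> nonvalues_unshared con G"

lemma term_of_represents: "represents con G t \<Longrightarrow> term_of G = t"
  using unfold_tg_denotes[of G "root G" t "Suc (card (verts G))"]
  by (auto simp: term_of_def represents_def simp del: unfold_tg.simps)

lemma represents_walk_verts: "represents con G t \<Longrightarrow> walk G (root G) q = Some u \<Longrightarrow> u \<in> verts G"
  unfolding represents_def using reach_iff_walk by blast

lemma represents_verts_walk: "represents con G t \<Longrightarrow> u \<in> verts G \<Longrightarrow> \<exists>q. walk G (root G) q = Some u"
  unfolding represents_def using reach_iff_walk by blast

lemma represents_walk_closed: "represents con G t \<Longrightarrow> v \<in> verts G \<Longrightarrow> walk G v q = Some u \<Longrightarrow> u \<in> verts G"
proof -
  assume g: "represents con G t" and v: "v \<in> verts G" and w: "walk G v q = Some u"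
  obtain p where "walk G (root G) p = Some v" using represents_verts_walk[OF g v] by blast
  then have "walk G (root G) (p @ q) = Some u" using w by (simp add: walk_append_Some)
  then show ?thesis using represents_walk_verts[OF g] by blast
qed

lemma represents_succ_closed: "represents con G t \<Longrightarrow> v \<in> verts G \<Longrightarrow> set (succ G v) \<subseteq> verts G"
proof
  fix u assume g: "represents con G t" and v: "v \<in> verts G" and "u \<in> set (succ G v)"
  then obtain i where "i < length (succ G v)" "succ G v ! i = u" by (auto simp: in_set_conv_nth)
  then have "walk G v [i] = Some u" by simp
  then show "u \<in> verts G" using represents_walk_closed[OF g v] by blast
qed

lemma represents_walk_denotes: "represents con G t \<Longrightarrow> walk G (root G) q = Some u \<Longrightarrow>
    valid_pos t q \<and> denotes G u (subt t q)"
  unfolding represents_def using denotes_walk by blast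

lemma represents_verts_denote: "represents con G t \<Longrightarrow> u \<in> verts G \<Longrightarrow> \<exists>s. denotes G u s"
  using represents_verts_walk represents_walk_denotes by metis

lemma walk_to_nonvalue_unique:
  assumes g: "represents con G t"
  shows "walk G (root G) p = Some u \<Longrightarrow> walk G (root G) q = Some u \<Longrightarrow> denotes G u s \<Longrightarrow>
     \<not> constr_term con s \<Longrightarrow> p = q"
proof (induction p arbitrary: u s q rule: rev_induct)
  case Nil
  then have u: "u = root G" by simp
  show ?case
  proof (cases q rule: rev_exhaust)
    case (snoc q' j)
    then obtain x where x: "walk G (root G) q' = Some x" "j < length (succ G x)" "succ G x ! j = u"
      using Nil.prems by (auto simp: walk_snoc)
    then have "(x, j) \<in> inedges G u" using represents_walk_verts[OF g] by (auto simp: inedges_def)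
    moreover have "u \<in> verts G" using Nil.prems represents_walk_verts[OF g] by blast
    ultimately have "u \<noteq> root G"
      using g Nil.prems unfolding represents_def nonvalues_unshared_def by blast
    then show ?thesis using u by simp
  qed simp
next
  case (snoc i p')
  obtain x where x: "walk G (root G) p' = Some x" "i < length (succ G x)" "succ G x ! i = u"
    using snoc.prems by (auto simp: walk_snoc)
  have ux: "(x, i) \<in> inedges G u" using x represents_walk_verts[OF g] by (auto simp: inedges_def)
  have uv: "u \<in> verts G" using snoc.prems represents_walk_verts[OF g] by blast
  have U: "u \<noteq> root G \<and> (\<forall>v' i'. (v', i') \<in> inedges G u \<longrightarrow> v' = x \<and> i' = i)"
    using g snoc.prems ux uv unfolding represents_def nonvalues_unshared_def by blast
  show ?case
  proof (cases q rule: rev_exhaust)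
    case Nil
    then show ?thesis using snoc.prems U by simp
  next
    case (snoc q' j)
    then obtain y where y: "walk G (root G) q' = Some y" "j < length (succ G y)" "succ G y ! j = u"
      using snoc.prems by (auto simp: walk_snoc)
    then have "(y, j) \<in> inedges G u" using represents_walk_verts[OF g] by (auto simp: inedges_def)
    then have yx: "y = x" "j = i" using U by auto
    obtain sx where sx: "denotes G x sx" using represents_walk_denotes[OF g x(1)] by blast
    have "walk G x [i] = Some u" using x by simp
    then have "valid_pos sx [i]" "denotes G u (subt sx [i])" using denotes_walk[OF sx] by blast+
    then have "s = subt sx [i]" using snoc.prems denotes_functional by metis
    then have "\<not> constr_term con sx" using snoc.prems(4) constr_term_subt \<open>valid_pos sx [i]\<close> by metis
    then have "p' = q'" using snoc.IH[OF x(1) _ sx] y yx by simp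
    then show ?thesis using snoc yx by simp
  qed
qed

lemma walk_to_nonvalue_unique_from:
  assumes g: "represents con G t" and v: "v \<in> verts G"
    and "walk G v q1 = Some u" "walk G v q2 = Some u" "denotes G u s" "\<not> constr_term con s"
  shows "q1 = q2"
proof -
  obtain p where p: "walk G (root G) p = Some v" using represents_verts_walk[OF g v] by blast
  have "walk G (root G) (p @ q1) = Some u" "walk G (root G) (p @ q2) = Some u"
    using assms(3,4) p by (simp_all add: walk_append_Some)
  then have "p @ q1 = p @ q2"
    using walk_to_nonvalue_unique[OF g _ _ assms(5,6)] by blast
  then show ?thesis by simp
qed

lemma is_path_Cons: "is_path G (a # vs) \<longleftrightarrow> a \<in> verts G \<and>
   (vs = [] \<or> (is_path G vs \<and> hd vs \<in> set (succ G a)))"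
  unfolding is_path_def by (cases vs) (auto simp: less_Suc_eq_0_disj nth_Cons' split: nat.splits)

lemma constructor_path_Cons: "constructor_path con G (a # vs) \<longleftrightarrow>
   (\<exists>c. lab G a = Some c \<and> con c) \<and> constructor_path con G vs"
  by (auto simp: constructor_path_def)

lemma constructor_path_if_constr_term: "denotes G a s \<Longrightarrow> constr_term con s \<Longrightarrow> is_path G vs \<Longrightarrow> hd vs = a \<Longrightarrow>
    constructor_path con G vs"
proof (induction vs arbitrary: a s)
  case Nil
  then show ?case by (simp add: is_path_def)
next
  case (Cons a' vs)
  then have a: "a' = a" by simp
  from Cons.prems obtain c ts where s: "s = Fun c ts" by (cases s) (auto simp: not_constr_term_Var)
  then have c: "con c" "\<forall>t\<in>set ts. constr_term con t" using Cons.prems by (auto simp: constr_term_Fun)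
  have L: "lab G a = Some c" "length ts = length (succ G a)"
    "\<forall>i<length ts. denotes G (succ G a ! i) (ts ! i)"
    using denotes_FunD Cons.prems s by metis+
  show ?case
  proof (cases "vs = []")
    case True
    then show ?thesis using a L c by (simp add: constructor_path_def)
  next
    case False
    then have P: "is_path G vs" "hd vs \<in> set (succ G a)" using Cons.prems a is_path_Cons by metis+
    then obtain j where j: "j < length (succ G a)" "succ G a ! j = hd vs" by (auto simp: in_set_conv_nth)
    then have "denotes G (hd vs) (ts ! j)" "constr_term con (ts ! j)" using L c by (auto simp: nth_mem)
    then have "constructor_path con G vs" using Cons.IH P by blast
    then show ?thesis using a L c by (simp add: constructor_path_Cons)
  qed
qed

lemma constr_term_if_constructor_paths: "denotes G a s \<Longrightarrow> (\<forall>v\<in>verts G. set (succ G v) \<subseteq> verts G) \<Longrightarrow>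
    a \<in> verts G \<Longrightarrow>
    (\<forall>vs. is_path G vs \<and> hd vs = a \<longrightarrow> constructor_path con G vs) \<Longrightarrow> constr_term con s"
proof (induction rule: denotes.induct)
  case (denotes_Var v x)
  have "is_path G [v]" using denotes_Var by (simp add: is_path_Cons)
  then have "constructor_path con G [v]" using denotes_Var by auto
  then show ?case using denotes_Var by (simp add: constructor_path_def)
next
  case (denotes_Fun v f ts)
  have "is_path G [v]" using denotes_Fun by (simp add: is_path_Cons)
  then have "constructor_path con G [v]" using denotes_Fun by auto
  then have cf: "con f" using denotes_Fun by (simp add: constructor_path_def)
  have "\<forall>i<length ts. constr_term con (ts ! i)"
  proof (intro allI impI)
    fix i assume i: "i < length ts"
    define c where "c = succ G v ! i"
    have ss: "set (succ G v) \<subseteq> verts G" using denotes_Fun.prems(1,2) by blast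
    have cv: "c \<in> verts G" using ss i denotes_Fun.hyps(2) nth_mem[of i "succ G v"]
      unfolding c_def by (metis subsetD)
    have cp: "\<forall>vs. is_path G vs \<and> hd vs = c \<longrightarrow> constructor_path con G vs"
    proof (intro allI impI)
      fix vs assume vs: "is_path G vs \<and> hd vs = c"
      then have "is_path G (v # vs)" using denotes_Fun.prems i denotes_Fun.hyps(2)
        by (auto simp: is_path_Cons c_def nth_mem)
      then have "constructor_path con G (v # vs)" using denotes_Fun.prems by auto
      then show "constructor_path con G vs" by (simp add: constructor_path_Cons)
    qed
    have "denotes G c (ts ! i) \<and> (c \<in> verts G \<longrightarrow>
          (\<forall>vs. is_path G vs \<and> hd vs = c \<longrightarrow> constructor_path con G vs) \<longrightarrow> constr_term con (ts ! i))"
      using denotes_Fun.IH i denotes_Fun.hyps(2) denotes_Fun.prems(1) unfolding c_def by auto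
    then show "constr_term con (ts ! i)" using cp cv by blast
  qed
  then show ?case unfolding constr_term_Fun using cf by (metis in_set_conv_nth)
qed

lemma constructor_trs_rule: "constructor_trs con ar R \<Longrightarrow> (l, r) \<in> R \<Longrightarrow>
   (\<exists>f ps. l = Fun f ps \<and> \<not> con f) \<and> linear_trm l \<and> vars r \<subseteq> vars l"
  unfolding constructor_trs_def by fastforce

lemma rule_graph_gsucc_False: "gsucc (rule_graph l r) (False, q) =
   (case subt l q of Fun g ts \<Rightarrow> map (\<lambda>i. (False, q @ [i])) [0..<length ts] | Var x \<Rightarrow> [])"
  by (simp add: rule_graph_def)

lemma rule_graph_gsucc_True: "gsucc (rule_graph l r) (True, q) =
   (case subt r q of Fun g ts \<Rightarrow> map (\<lambda>i. rnode l r (q @ [i])) [0..<length ts] | Var x \<Rightarrow> [])"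
  by (simp add: rule_graph_def)

lemma rule_graph_glab_False: "glab (rule_graph l r) (False, q) =
    (case subt l q of Fun g ts \<Rightarrow> Some g | Var x \<Rightarrow> None)"
  by (simp add: rule_graph_def)

lemma rule_graph_glab_True: "glab (rule_graph l r) (True, q) =
    (case subt r q of Fun g ts \<Rightarrow> Some g | Var x \<Rightarrow> None)"
  by (simp add: rule_graph_def)

lemma rule_graph_roots: "lroot (rule_graph l r) = (False, [])" "rroot (rule_graph l r) = rnode l r []"
  by (simp_all add: rule_graph_def)

lemma rnode_Var: "subt r q = Var x \<Longrightarrow> rnode l r q = (False, varpos l x)"
  by (simp add: rnode_def)

lemma rnode_Fun: "subt r q = Fun g ts \<Longrightarrow> rnode l r q = (True, q)"
  by (simp add: rnode_def)

lemma rule_graph_lhs_succ: "q \<in> poss l \<Longrightarrow> b \<in> set (gsucc (rule_graph l r) (False, q)) \<Longrightarrow>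
    b \<in> {(False, p) | p. p \<in> poss l}"
  using poss_snoc_Fun[of q l] by (cases "subt l q") (auto simp: rule_graph_gsucc_False)

lemma reach_rule_graph_lhs: "reach (gsucc (rule_graph l r)) (False, []) = {(False, q) | q. q \<in> poss l}"
proof
  show "reach (gsucc (rule_graph l r)) (False, []) \<subseteq> {(False, q) | q. q \<in> poss l}"
  proof
    fix y assume "y \<in> reach (gsucc (rule_graph l r)) (False, [])"
    then have "((False, []), y) \<in> (edges (gsucc (rule_graph l r)))\<^sup>*" by (simp add: reach_def)
    then show "y \<in> {(False, q) | q. q \<in> poss l}"
    proof (induction rule: rtrancl_induct)
      case base
      then show ?case by (simp add: poss_def)
    next
      case (step a b)
      then obtain q where a: "a = (False, q)" "q \<in> poss l" by blast
      from step(2) a have "b \<in> set (gsucc (rule_graph l r) (False, q))" by (simp add: edges_def)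
      then show ?case using rule_graph_lhs_succ a(2) by blast
    qed
  qed
next
  show "{(False, q) | q. q \<in> poss l} \<subseteq> reach (gsucc (rule_graph l r)) (False, [])"
  proof -
    have "valid_pos l q \<Longrightarrow> ((False, []), (False, q)) \<in> (edges (gsucc (rule_graph l r)))\<^sup>*" for q
    proof (induction q rule: rev_induct)
      case Nil
      then show ?case by simp
    next
      case (snoc i q)
      then obtain g ts where gt: "subt l q = Fun g ts" "i < length ts" using subt_snoc by blast
      have "valid_pos l q" using snoc.prems valid_pos_append by blast
      then have 1: "((False, []), (False, q)) \<in> (edges (gsucc (rule_graph l r)))\<^sup>*"
        using snoc.IH by blast
      have "((False, q), (False, q @ [i])) \<in> edges (gsucc (rule_graph l r))"
        using gt by (auto simp: edges_def rule_graph_gsucc_False)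
      then show ?case by (rule rtrancl_into_rtrancl[OF 1])
    qed
    then show ?thesis by (auto simp: reach_def poss_def)
  qed
qed

definition rhs_nodes :: "('f, 'x) trm \<Rightarrow> ('f, 'x) trm \<Rightarrow> (bool \<times> nat list) set" where
  "rhs_nodes l r = {(True, q) | q. q \<in> poss r \<and> (\<exists>g ts. subt r q = Fun g ts)}"

lemma rnode_in_rule_graph: "vars r \<subseteq> vars l \<Longrightarrow> q \<in> poss r \<Longrightarrow>
   rnode l r q \<in> rhs_nodes l r \<union> {(False, p) | p. p \<in> poss l}"
proof (cases "subt r q")
  case (Var x)
  assume "vars r \<subseteq> vars l" "q \<in> poss r"
  then have "x \<in> vars l" using pos_imp_vars[of r q x] Var by (auto simp: poss_def)
  then show ?thesis using subt_varpos[of x l] Var by (simp add: rnode_Var)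
next
  case (Fun g ts)
  assume "q \<in> poss r"
  then show ?thesis using Fun by (simp add: rnode_Fun rhs_nodes_def)
qed

lemma reach_rule_graph_rhs: assumes vr: "vars r \<subseteq> vars l"
  shows "reach (gsucc (rule_graph l r)) (rnode l r []) \<subseteq> rhs_nodes l r \<union> {(False, p) | p. p \<in> poss l}"
proof
  fix y assume "y \<in> reach (gsucc (rule_graph l r)) (rnode l r [])"
  then have "(rnode l r [], y) \<in> (edges (gsucc (rule_graph l r)))\<^sup>*" by (simp add: reach_def)
  then show "y \<in> rhs_nodes l r \<union> {(False, p) | p. p \<in> poss l}"
  proof (induction rule: rtrancl_induct)
    case base
    then show ?case using rnode_in_rule_graph[OF vr, of "[]"] by (simp add: poss_def)
  next
    case (step a b)
    from step(2) have b: "b \<in> set (gsucc (rule_graph l r) a)" by (simp add: edges_def)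
    from step(3) show ?case
    proof
      assume "a \<in> rhs_nodes l r"
      then obtain q g ts where a: "a = (True, q)" "q \<in> poss r" "subt r q = Fun g ts"
        by (auto simp: rhs_nodes_def)
      then obtain i where i: "i < length ts" "b = rnode l r (q @ [i])"
        using b by (auto simp: rule_graph_gsucc_True)
      then have "q @ [i] \<in> poss r" using a by (simp add: valid_pos_append poss_def)
      then show ?thesis using rnode_in_rule_graph[OF vr] i by simp
    next
      assume "a \<in> {(False, p) | p. p \<in> poss l}"
      then obtain q where "a = (False, q)" "q \<in> poss l" by blast
      then show ?thesis using rule_graph_lhs_succ b by blast
    qed
  qed
qed

lemma rhs_nodes_reach: "(True, q) \<in> rhs_nodes l r \<Longrightarrow>
    (True, q) \<in> reach (gsucc (rule_graph l r)) (rnode l r [])"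
proof -
  assume "(True, q) \<in> rhs_nodes l r"
  then have "valid_pos r q" "\<exists>g ts. subt r q = Fun g ts" by (auto simp: rhs_nodes_def poss_def)
  then have "(rnode l r [], (True, q)) \<in> (edges (gsucc (rule_graph l r)))\<^sup>*"
  proof (induction q rule: rev_induct)
    case Nil
    then show ?case by (auto simp: rnode_Fun)
  next
    case (snoc i q)
    then obtain g ts where gt: "subt r q = Fun g ts" "i < length ts" using subt_snoc by blast
    have "valid_pos r q" using snoc.prems valid_pos_append by blast
    then have 1: "(rnode l r [], (True, q)) \<in> (edges (gsucc (rule_graph l r)))\<^sup>*"
      using snoc.IH gt by blast
    have "rnode l r (q @ [i]) = (True, q @ [i])" using snoc.prems(2) by (auto simp: rnode_Fun)
    then have "((True, q), (True, q @ [i])) \<in> edges (gsucc (rule_graph l r))"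
      using gt by (force simp: edges_def rule_graph_gsucc_True)
    then show ?case by (rule rtrancl_into_rtrancl[OF 1])
  qed
  then show ?thesis by (simp add: reach_def)
qed

lemma new_part_rule_graph: "vars r \<subseteq> vars l \<Longrightarrow> new_part (rule_graph l r) = rhs_nodes l r"
proof
  assume vr: "vars r \<subseteq> vars l"
  show "new_part (rule_graph l r) \<subseteq> rhs_nodes l r"
    using reach_rule_graph_rhs[OF vr] reach_rule_graph_lhs[of l r]
    by (auto simp: new_part_def rule_graph_roots)
  show "rhs_nodes l r \<subseteq> new_part (rule_graph l r)"
  proof
    fix y assume y: "y \<in> rhs_nodes l r"
    then obtain q where "y = (True, q)" by (auto simp: rhs_nodes_def)
    then show "y \<in> new_part (rule_graph l r)"
      using rhs_nodes_reach[of q l r] y reach_rule_graph_lhs[of l r]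
      by (auto simp: new_part_def rule_graph_roots)
  qed
qed

section \<open>Firing a redex\<close>

lemma fresh_for_exists: "finite (verts G) \<Longrightarrow> \<exists>\<iota>. fresh_for (rule_graph l r) \<iota> G"
proof -
  assume fin: "finite (verts G)"
  define \<iota> where "\<iota> = (\<lambda>y :: bool \<times> nat list. Suc (Max (verts G)) + to_nat y)"
  have "inj \<iota>" unfolding \<iota>_def by (auto intro!: injI)
  moreover have "\<iota> y \<notin> verts G" for y
  proof
    assume "\<iota> y \<in> verts G"
    then have "\<iota> y \<le> Max (verts G)" using fin by simp
    then show False unfolding \<iota>_def by simp
  qed
  ultimately have "fresh_for (rule_graph l r) \<iota> G"
    unfolding fresh_for_def by (auto intro: inj_on_subset)
  then show ?thesis by blast
qed

locale redex_firing =
  fixes con :: "'f \<Rightarrow> bool" and G :: "('f, 'x) tgraph" and t :: "('f, 'x) trm"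
    and l r :: "('f, 'x) trm" and \<phi> \<iota> :: "bool \<times> nat list \<Rightarrow> nat"
  assumes G_represents: "represents con G t"
    and lhs: "\<exists>f ps. l = Fun f ps \<and> \<not> con f"
    and lin: "linear_trm l"
    and vr: "vars r \<subseteq> vars l"
    and redex: "is_redex con (rule_graph l r) \<phi> G"
    and fresh: "fresh_for (rule_graph l r) \<iota> G"
begin

text \<open>In the notation of firing: \<open>w\<close> is the image of the left root, \<open>a x\<close> the vertex matched
  by the variable \<open>x\<close> and \<open>\<sigma> x\<close> the term it denotes (unique by \<open>denotes_functional\<close>, so
  the \<open>THE\<close> is not junk), \<open>\<psi>\<close> places the rule graph into the new graph, \<open>s'\<close> is the copy of
  the right root and \<open>rd\<close> redirects edges pointing to \<open>w\<close>.\<close>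

abbreviation "H \<equiv> rule_graph l r"
definition "w = \<phi> (False, [])"
definition "\<sigma> x = (THE s. denotes G (\<phi> (False, varpos l x)) s)"
definition "a x = \<phi> (False, varpos l x)"
definition "\<psi> v = (if v \<in> reach (gsucc H) (lroot H) then \<phi> v else \<iota> v)"
definition "s' = \<psi> (rroot H)"
definition "rd v = (if v = w then s' else v)"
definition "G' = fire H \<phi> \<iota> G"

lemma reach_lhs: "reach (gsucc H) (lroot H) = {(False, q) | q. q \<in> poss l}"
  using reach_rule_graph_lhs by (simp add: rule_graph_roots)

lemma phi_in_verts: "q \<in> poss l \<Longrightarrow> \<phi> (False, q) \<in> verts G"
  using redex reach_lhs unfolding is_redex_def by blast

lemma phi_lab_succ: "q \<in> poss l \<Longrightarrow> subt l q = Fun g ts \<Longrightarrow>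
   lab G (\<phi> (False, q)) = Some g \<and> succ G (\<phi> (False, q)) = map (\<lambda>i. \<phi> (False, q @ [i])) [0..<length ts]"
proof -
  assume q: "q \<in> poss l" and s: "subt l q = Fun g ts"
  have "(False, q) \<in> reach (gsucc H) (lroot H)" using q reach_lhs by blast
  moreover have "glab H (False, q) = Some g" using s by (simp add: rule_graph_glab_False)
  ultimately have "lab G (\<phi> (False, q)) = Some g \<and> succ G (\<phi> (False, q)) = map \<phi> (gsucc H (False, q))"
    using redex unfolding is_redex_def by blast
  then show ?thesis using s by (simp add: rule_graph_gsucc_False)
qed

lemma phi_var_constructor_paths: "q \<in> poss l \<Longrightarrow> subt l q = Var x \<Longrightarrow>
   (\<forall>vs. is_path G vs \<and> hd vs = \<phi> (False, q) \<longrightarrow> constructor_path con G vs)"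
proof -
  assume q: "q \<in> poss l" and s: "subt l q = Var x"
  have "(False, q) \<in> reach (gsucc H) (lroot H)" using q reach_lhs by blast
  moreover have "glab H (False, q) = None" using s by (simp add: rule_graph_glab_False)
  ultimately show ?thesis using redex unfolding is_redex_def by blast
qed

lemma verts_closed: "\<forall>v\<in>verts G. set (succ G v) \<subseteq> verts G"
  using represents_succ_closed[OF G_represents] by blast

lemma root_in_verts: "root G \<in> verts G"
  using G_represents unfolding represents_def reach_def by blast

lemma sigma_denotes: "x \<in> vars l \<Longrightarrow> denotes G (a x) (\<sigma> x) \<and> constr_term con (\<sigma> x)"
proof -
  assume x: "x \<in> vars l"
  then have vp: "varpos l x \<in> poss l" "subt l (varpos l x) = Var x" using subt_varpos[OF x] by auto
  then have av: "a x \<in> verts G" using phi_in_verts by (simp add: a_def)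
  then obtain s where s: "denotes G (a x) s" using represents_verts_denote[OF G_represents] by blast
  then have "denotes G (a x) (\<sigma> x)" unfolding \<sigma>_def a_def[symmetric] using denotes_functional
    by (metis theI)
  moreover have "constr_term con (\<sigma> x)"
    using constr_term_if_constructor_paths[OF calculation verts_closed av]
      phi_var_constructor_paths[OF vp]
      by (simp add: a_def)
  ultimately show ?thesis by blast
qed

lemma phi_denotes_subst: "q \<in> poss l \<Longrightarrow> denotes G (\<phi> (False, q)) (subst \<sigma> (subt l q))"
proof (induction "subt l q" arbitrary: q)
  case (Var x)
  then have "x \<in> vars l" using pos_imp_vars by (metis poss_def mem_Collect_eq)
  moreover have "varpos l x = q" using varpos_linear[OF lin Var(2) Var(1)[symmetric]] .
  ultimately show ?case using sigma_denotes[of x] Var(1)[symmetric] by (simp add: a_def)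
next
  case (Fun g ts)
  have "denotes G (\<phi> (False, q @ [i])) (subst \<sigma> (ts ! i))" if i: "i < length ts" for i
    using poss_snoc_Fun[OF Fun(3) Fun(2)[symmetric] i] Fun(1)[of "q @ [i]"] i by (simp add: nth_mem)
  then show ?case using phi_lab_succ[OF Fun(3) Fun(2)[symmetric]] Fun(2)[symmetric]
    by (auto intro!: denotes_Fun)
qed

lemma redex_vertex: "w \<in> verts G" "denotes G w (subst \<sigma> l)" "\<not> constr_term con (subst \<sigma> l)"
proof -
  have "[] \<in> poss l" by (simp add: poss_def)
  then show "w \<in> verts G" "denotes G w (subst \<sigma> l)"
    using phi_in_verts[of "[]"] phi_denotes_subst[of "[]"] by (auto simp: w_def)
  show "\<not> constr_term con (subst \<sigma> l)" using lhs by (auto simp: constr_term_Fun)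
qed

lemma new_part_eq: "new_part H = rhs_nodes l r"
  using new_part_rule_graph[OF vr] .

lemma fresh_inj: "inj_on \<iota> (rhs_nodes l r)" and fresh_disj: "\<iota> ` rhs_nodes l r \<inter> verts G = {}"
  using fresh new_part_eq by (auto simp: fresh_for_def)

lemma fresh_notin: "y \<in> rhs_nodes l r \<Longrightarrow> \<iota> y \<notin> verts G"
  using fresh_disj by blast

lemma root_fire: "root G' = rd (root G)"
  by (simp add: G'_def fire_def Let_def rd_def s'_def \<psi>_def w_def rule_graph_roots)

lemma verts_fire: "verts G' = reach (succ G') (root G')"
  by (simp add: G'_def fire_def Let_def)

lemma fire_old_vertex: "v \<in> verts G \<Longrightarrow>
    succ G' v = map rd (succ G v) \<and> lab G' v = lab G v \<and> varof G' v = varof G v"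
proof -
  assume v: "v \<in> verts G"
  then have nn: "\<not> (\<exists>y\<in>new_part H. \<iota> y = v)" using fresh_disj new_part_eq by blast
  show ?thesis using nn
    by (simp add: G'_def fire_def Let_def rd_def s'_def \<psi>_def w_def rule_graph_roots)
qed

lemma fire_new_vertex: "(True, q) \<in> rhs_nodes l r \<Longrightarrow> subt r q = Fun g ts \<Longrightarrow>
   lab G' (\<iota> (True, q)) = Some g \<and>
   succ G' (\<iota> (True, q)) = map (\<lambda>i. rd (\<psi> (rnode l r (q @ [i])))) [0..<length ts] \<and>
   varof G' (\<iota> (True, q)) = None"
proof -
  assume q: "(True, q) \<in> rhs_nodes l r" and s: "subt r q = Fun g ts"
  have ex: "\<exists>y\<in>new_part H. \<iota> y = \<iota> (True, q)" using q new_part_eq by blast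
  have th: "(THE y. y \<in> new_part H \<and> \<iota> y = \<iota> (True, q)) = (True, q)"
    using q new_part_eq fresh_inj by (auto intro!: the_equality dest: inj_onD)
  show ?thesis using ex th s
    by (simp add: G'_def fire_def Let_def rd_def s'_def \<psi>_def w_def rule_graph_roots
        rule_graph_glab_True rule_graph_gsucc_True)
qed

lemma var_vertex_avoids_redex: "x \<in> vars l \<Longrightarrow> a x \<in> verts G \<and> (\<forall>q. walk G (a x) q \<noteq> Some w)"
proof -
  assume x: "x \<in> vars l"
  then have av: "a x \<in> verts G" using subt_varpos[OF x] phi_in_verts by (simp add: a_def)
  have "walk G (a x) q \<noteq> Some w" for q
  proof
    assume "walk G (a x) q = Some w"
    then have "valid_pos (\<sigma> x) q" "denotes G w (subt (\<sigma> x) q)"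
      using denotes_walk sigma_denotes[OF x] by blast+
    then have "subst \<sigma> l = subt (\<sigma> x) q" using denotes_functional redex_vertex(2) by blast
    then have "constr_term con (subst \<sigma> l)"
      using constr_term_subt sigma_denotes[OF x] \<open>valid_pos (\<sigma> x) q\<close> by metis
    then show False using redex_vertex(3) by blast
  qed
  then show ?thesis using av by blast
qed

lemma var_vertex_ne_redex: "x \<in> vars l \<Longrightarrow> a x \<noteq> w"
  using var_vertex_avoids_redex[of x] by (metis walk.simps(1))

lemma rd_other: "v \<noteq> w \<Longrightarrow> rd v = v"
  by (simp add: rd_def)

lemma rd_var_vertex: "x \<in> vars l \<Longrightarrow> rd (a x) = a x"
  using var_vertex_ne_redex rd_other by blast

lemma rd_new: "y \<in> rhs_nodes l r \<Longrightarrow> rd (\<iota> y) = \<iota> y"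
  using fresh_notin redex_vertex(1) rd_other by metis

lemma psi_rnode_Var: "q \<in> poss r \<Longrightarrow> subt r q = Var x \<Longrightarrow> x \<in> vars l \<and> \<psi> (rnode l r q) = a x"
proof -
  assume q: "q \<in> poss r" "subt r q = Var x"
  then have x: "x \<in> vars l" using pos_imp_vars[of r q x] vr by (auto simp: poss_def)
  then have "(False, varpos l x) \<in> reach (gsucc H) (lroot H)" using subt_varpos[OF x] reach_lhs by blast
  then show ?thesis using q x by (simp add: rnode_Var \<psi>_def a_def)
qed

lemma psi_rnode_Fun: "subt r q = Fun g ts \<Longrightarrow> \<psi> (rnode l r q) = \<iota> (True, q)"
  using reach_lhs by (simp add: rnode_Fun \<psi>_def)

lemma denotes_fire_unaffected: "denotes G v s \<Longrightarrow> v \<in> verts G \<Longrightarrow> (\<forall>q. walk G v q \<noteq> Some w) \<Longrightarrow> denotes G' v s"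
proof (induction rule: denotes.induct)
  case (denotes_Var v x)
  then show ?case using fire_old_vertex[of v] by (auto intro: denotes.denotes_Var)
next
  case (denotes_Fun v f ts)
  have ch: "\<forall>i<length (succ G v). succ G v ! i \<in> verts G \<and> (\<forall>q. walk G (succ G v ! i) q \<noteq> Some w)"
  proof (intro allI impI, rule conjI)
    fix i assume i: "i < length (succ G v)"
    show "succ G v ! i \<in> verts G" using verts_closed denotes_Fun.prems(1) i by (meson nth_mem subsetD)
    show "\<forall>q. walk G (succ G v ! i) q \<noteq> Some w"
    proof (intro allI notI)
      fix q assume "walk G (succ G v ! i) q = Some w"
      then have "walk G v (i # q) = Some w" using i by simp
      then show False using denotes_Fun.prems(2) by blast
    qed
  qed
  have m0: "\<forall>u\<in>set (succ G v). rd u = u"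
  proof
    fix u assume "u \<in> set (succ G v)"
    then obtain i where i: "i < length (succ G v)" "u = succ G v ! i" by (auto simp: in_set_conv_nth)
    then have "u \<noteq> w" using ch by (metis walk.simps(1))
    then show "rd u = u" by (rule rd_other)
  qed
  have m: "map rd (succ G v) = succ G v" using m0 by (simp add: map_idI)
  have "\<forall>i<length ts. denotes G' (succ G v ! i) (ts ! i)"
    using denotes_Fun.IH ch denotes_Fun.hyps(2) by auto
  then show ?case
    using fire_old_vertex[OF denotes_Fun.prems(1)] m denotes_Fun.hyps(1,2)
    by (auto intro: denotes.denotes_Fun)
qed

lemma denotes_fire_var_vertex: "x \<in> vars l \<Longrightarrow> denotes G' (a x) (\<sigma> x)"
  using denotes_fire_unaffected sigma_denotes var_vertex_avoids_redex by blast

lemma contractum_root_cases: "(\<exists>x. x \<in> vars l \<and> s' = a x) \<or>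
    (s' = \<iota> (True, []) \<and> (True, []) \<in> rhs_nodes l r)"
proof (cases r)
  case (Var x)
  have "[] \<in> poss r" by (simp add: poss_def)
  moreover have "subt r [] = Var x" using Var by simp
  ultimately have x: "x \<in> vars l" and e: "\<psi> (rnode l r []) = a x" using psi_rnode_Var[of "[]" x] by auto
  have e2: "s' = a x" using e by (simp add: s'_def rule_graph_roots)
  then show ?thesis using x by blast
next
  case (Fun g ts)
  then have sr: "subt r [] = Fun g ts" by simp
  then have "(True, []) \<in> rhs_nodes l r" by (auto simp: rhs_nodes_def poss_def)
  moreover have "s' = \<iota> (True, [])" using psi_rnode_Fun[OF sr] by (simp add: s'_def rule_graph_roots)
  ultimately show ?thesis by blast
qed

lemma denotes_fire_copy:
  "q \<in> poss r \<Longrightarrow> denotes G' (rd (\<psi> (rnode l r q))) (subst \<sigma> (subt r q))"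
proof (induction "subt r q" arbitrary: q)
  case (Var x)
  then have "x \<in> vars l" "\<psi> (rnode l r q) = a x" using psi_rnode_Var[OF Var(2)] by auto
  then show ?case using Var(1)[symmetric] denotes_fire_var_vertex rd_var_vertex by simp
next
  case (Fun g ts)
  have q: "(True, q) \<in> rhs_nodes l r" using Fun(2)[symmetric] Fun(3) by (auto simp: rhs_nodes_def)
  have "denotes G' (rd (\<psi> (rnode l r (q @ [i])))) (subst \<sigma> (ts ! i))" if i: "i < length ts" for i
    using poss_snoc_Fun[OF Fun(3) Fun(2)[symmetric] i] Fun(1)[of "q @ [i]"] i by (simp add: nth_mem)
  then have "denotes G' (\<iota> (True, q)) (Fun g (map (subst \<sigma>) ts))"
    using fire_new_vertex[OF q Fun(2)[symmetric]] by (auto intro!: denotes.denotes_Fun)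
  then show ?case using psi_rnode_Fun[OF Fun(2)[symmetric]] rd_new[OF q] Fun(2)[symmetric] by simp
qed

lemma denotes_fire_contractum: "denotes G' s' (subst \<sigma> r)"
proof -
  have "rd s' = s'" using contractum_root_cases rd_var_vertex rd_new by auto
  then show ?thesis
    using denotes_fire_copy[of "[]"] by (simp add: poss_def s'_def rule_graph_roots)
qed

lemma walk_redex_unique: "v \<in> verts G \<Longrightarrow> walk G v q = Some w \<Longrightarrow> walk G v q' = Some w \<Longrightarrow> q' = q"
  using walk_to_nonvalue_unique_from[OF G_represents _ _ _ redex_vertex(2,3)] by blast

text \<open>Since the walk to the redex is unique, exactly one child of each ancestor leads to it,
  and the other children are unaffected by the step.\<close>
lemma denotes_fire_ancestor: "denotes G v s \<Longrightarrow> v \<in> verts G \<Longrightarrow> walk G v q = Some w \<Longrightarrow>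
   denotes G' (rd v) (replace s q (subst \<sigma> r))"
proof (induction q arbitrary: v s)
  case Nil
  then have "v = w" by simp
  then have "s = subst \<sigma> l" using Nil.prems(1) redex_vertex(2) denotes_functional by blast
  then show ?case using denotes_fire_contractum \<open>v = w\<close> by (simp add: rd_def)
next
  case (Cons i q)
  from Cons.prems(3) have i: "i < length (succ G v)" and wq: "walk G (succ G v ! i) q = Some w"
    by (auto split: if_splits)
  have "v \<noteq> w" using walk_redex_unique[OF Cons.prems(2,3), of "[]"] by auto
  then have rdv: "rd v = v" by (rule rd_other)
  obtain f ts where s: "s = Fun f ts"
    using Cons.prems(1) i by (cases s) (auto dest: denotes_VarD)
  note F = denotes_FunD[OF Cons.prems(1)[unfolded s]]
  note O = fire_old_vertex[OF Cons.prems(2)]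
  have civ: "\<And>j. j < length (succ G v) \<Longrightarrow> succ G v ! j \<in> verts G"
    using verts_closed Cons.prems(2) by (meson nth_mem subsetD)
  have other: "\<And>j. j < length (succ G v) \<Longrightarrow> j \<noteq> i \<Longrightarrow> \<forall>q'. walk G (succ G v ! j) q' \<noteq> Some w"
  proof (intro allI notI)
    fix j q' assume j: "j < length (succ G v)" "j \<noteq> i" and "walk G (succ G v ! j) q' = Some w"
    then have "walk G v (j # q') = Some w" by simp
    then show False using walk_redex_unique[OF Cons.prems(2,3)] j(2) by blast
  qed
  have IHi: "denotes G' (rd (succ G v ! i)) (replace (ts ! i) q (subst \<sigma> r))"
    using Cons.IH[OF _ civ[OF i] wq] F i by auto
  have ch: "\<forall>j<length (ts[i := replace (ts ! i) q (subst \<sigma> r)]).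
      denotes G' (succ G' v ! j) (ts[i := replace (ts ! i) q (subst \<sigma> r)] ! j)"
  proof (intro allI impI)
    fix j assume j: "j < length (ts[i := replace (ts ! i) q (subst \<sigma> r)])"
    then have j': "j < length (succ G v)" using F by simp
    show "denotes G' (succ G' v ! j) (ts[i := replace (ts ! i) q (subst \<sigma> r)] ! j)"
    proof (cases "j = i")
      case True
      then show ?thesis using IHi O j' F by simp
    next
      case False
      have nw: "\<forall>q'. walk G (succ G v ! j) q' \<noteq> Some w" using other[OF j' False] .
      then have "succ G v ! j \<noteq> w" by (metis walk.simps(1))
      then have "rd (succ G v ! j) = succ G v ! j" by (rule rd_other)
      moreover have "denotes G' (succ G v ! j) (ts ! j)"
        using denotes_fire_unaffected F j' civ[OF j'] nw by auto
      ultimately show ?thesis using False O j' by simp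
    qed
  qed
  have "denotes G' v (Fun f (ts[i := replace (ts ! i) q (subst \<sigma> r)]))"
    using ch O F by (intro denotes.denotes_Fun) auto
  then show ?case using rdv s by simp
qed

lemma fire_redex_position:
  assumes p: "walk G (root G) p = Some w"
  shows "valid_pos t p \<and> subt t p = subst \<sigma> l \<and> denotes G' (root G') (replace t p (subst \<sigma> r))"
proof -
  have rt: "denotes G (root G) t" using G_represents by (simp add: represents_def)
  have "valid_pos t p" "denotes G w (subt t p)"
    using represents_walk_denotes[OF G_represents p] by blast+
  moreover have "subt t p = subst \<sigma> l" using calculation(2) redex_vertex(2) denotes_functional by blast
  moreover have "denotes G' (root G') (replace t p (subst \<sigma> r))"
    using denotes_fire_ancestor[OF rt root_in_verts p] root_fire by simp
  ultimately show ?thesis by blast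
qed

lemma contractum_root_in: "s' \<in> verts G \<union> \<iota> ` rhs_nodes l r"
  using contractum_root_cases var_vertex_avoids_redex by (metis UnI1 UnI2 imageI)

lemma rd_in_verts: "v \<in> verts G \<Longrightarrow> rd v \<in> verts G \<union> \<iota> ` rhs_nodes l r"
  using contractum_root_in by (simp add: rd_def)

lemma rhs_nodes_Fun: "(True, q) \<in> rhs_nodes l r \<Longrightarrow> \<exists>g ts. subt r q = Fun g ts \<and> q \<in> poss r"
  by (auto simp: rhs_nodes_def)

lemma succ_fire_new_cases: "(True, q0) \<in> rhs_nodes l r \<Longrightarrow> i < length (succ G' (\<iota> (True, q0))) \<Longrightarrow>
   (\<exists>x. x \<in> vars l \<and> succ G' (\<iota> (True, q0)) ! i = a x) \<or>
   (succ G' (\<iota> (True, q0)) ! i = \<iota> (True, q0 @ [i]) \<and> (True, q0 @ [i]) \<in> rhs_nodes l r)"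
proof -
  assume q0: "(True, q0) \<in> rhs_nodes l r" and i: "i < length (succ G' (\<iota> (True, q0)))"
  obtain g ts where gt: "subt r q0 = Fun g ts" "q0 \<in> poss r" using rhs_nodes_Fun[OF q0] by blast
  note N = fire_new_vertex[OF q0 gt(1)]
  have il: "i < length ts" using i N by simp
  have e: "succ G' (\<iota> (True, q0)) ! i = rd (\<psi> (rnode l r (q0 @ [i])))" using N il by simp
  have qi: "q0 @ [i] \<in> poss r" and si: "subt r (q0 @ [i]) = ts ! i"
    using poss_snoc_Fun[OF gt(2,1) il] by auto
  show ?thesis
  proof (cases "ts ! i")
    case (Var x)
    then have "x \<in> vars l" "\<psi> (rnode l r (q0 @ [i])) = a x" using psi_rnode_Var[OF qi] si by auto
    then show ?thesis using e rd_var_vertex by auto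
  next
    case (Fun g' ts')
    then have 1: "\<psi> (rnode l r (q0 @ [i])) = \<iota> (True, q0 @ [i])" using psi_rnode_Fun si by simp
    have 2: "(True, q0 @ [i]) \<in> rhs_nodes l r" using qi si Fun by (auto simp: rhs_nodes_def)
    show ?thesis using e 1 2 rd_new[OF 2] by simp
  qed
qed

lemma finite_rhs_nodes: "finite (rhs_nodes l r)"
proof -
  have "rhs_nodes l r \<subseteq> (\<lambda>q. (True, q)) ` poss r" by (auto simp: rhs_nodes_def)
  then show ?thesis using finite_poss finite_subset by blast
qed

lemma verts_fire_subset: "verts G' \<subseteq> verts G \<union> \<iota> ` rhs_nodes l r"
proof
  fix u assume "u \<in> verts G'"
  then have "(root G', u) \<in> (edges (succ G'))\<^sup>*" using verts_fire by (simp add: reach_def)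
  then show "u \<in> verts G \<union> \<iota> ` rhs_nodes l r"
  proof (induction rule: rtrancl_induct)
    case base
    show ?case using rd_in_verts[OF root_in_verts] root_fire by simp
  next
    case (step b c)
    then have c: "c \<in> set (succ G' b)" by (simp add: edges_def)
    then obtain i where i: "i < length (succ G' b)" "c = succ G' b ! i" by (auto simp: in_set_conv_nth)
    from step(3) show ?case
    proof
      assume b: "b \<in> verts G"
      then have "c \<in> rd ` set (succ G b)" using c fire_old_vertex by auto
      moreover have "set (succ G b) \<subseteq> verts G" using verts_closed b by blast
      ultimately show ?thesis using rd_in_verts by blast
    next
      assume "b \<in> \<iota> ` rhs_nodes l r"
      then obtain y where y: "y \<in> rhs_nodes l r" "b = \<iota> y" by blast
      then obtain q0 where q0: "y = (True, q0)" by (auto simp: rhs_nodes_def)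
      have "(\<exists>x. x \<in> vars l \<and> c = a x) \<or> (c = \<iota> (True, q0 @ [i]) \<and> (True, q0 @ [i]) \<in> rhs_nodes l r)"
        using succ_fire_new_cases[of q0 i] y q0 i by auto
      then show ?thesis using var_vertex_avoids_redex by blast
    qed
  qed
qed

lemma finite_verts_fire: "finite (verts G')"
proof -
  have "finite (verts G)" using G_represents unfolding represents_def by blast
  then show ?thesis
    using verts_fire_subset finite_rhs_nodes finite_subset by (metis finite_Un finite_imageI)
qed

lemma succ_fire_old_cases: "v \<in> verts G \<Longrightarrow> i < length (succ G' v) \<Longrightarrow> succ G' v ! i = u \<Longrightarrow>
   i < length (succ G v) \<and> ((succ G v ! i = u \<and> u \<noteq> w) \<or> (succ G v ! i = w \<and> u = s'))"
  using fire_old_vertex[of v] by (auto simp: rd_def split: if_splits)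

lemma inedge_source_cases: "(v, i) \<in> inedges G' u \<Longrightarrow>
   v \<in> verts G \<or> (\<exists>q0. (True, q0) \<in> rhs_nodes l r \<and> v = \<iota> (True, q0))"
  using verts_fire_subset by (auto simp: inedges_def rhs_nodes_def)

lemma old_nonvalue_not_redirected: "u \<in> verts G \<Longrightarrow> denotes G u s0 \<Longrightarrow> \<not> constr_term con s0 \<Longrightarrow>
   u \<noteq> s' \<and> (\<forall>x\<in>vars l. u \<noteq> a x)"
proof -
  assume u: "u \<in> verts G" and r0: "denotes G u s0" and nc: "\<not> constr_term con s0"
  have na: "\<forall>x\<in>vars l. u \<noteq> a x"
  proof (intro ballI notI)
    fix x assume x: "x \<in> vars l" and "u = a x"
    then have "s0 = \<sigma> x" using r0 sigma_denotes denotes_functional by blast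
    then show False using nc sigma_denotes[OF x] by simp
  qed
  moreover have "u \<noteq> s'" using contractum_root_cases na u fresh_notin by metis
  ultimately show ?thesis by blast
qed

lemma iota_inj: "(True, q) \<in> rhs_nodes l r \<Longrightarrow> (True, q') \<in> rhs_nodes l r \<Longrightarrow> \<iota> (True, q) = \<iota> (True, q') \<Longrightarrow>
    q = q'"
  using fresh_inj by (auto dest: inj_onD)

lemma contractum_root_fresh: "s' \<notin> verts G \<Longrightarrow> s' = \<iota> (True, []) \<and> (True, []) \<in> rhs_nodes l r"
  using contractum_root_cases var_vertex_avoids_redex by auto

text \<open>An old vertex that reaches the redex denotes a term containing the redex, and one that
  does not reach it keeps its term.\<close>
lemma nonvalue_fire_old_vertex:
  assumes u: "u \<in> verts G" and r0: "denotes G u s0" and r: "denotes G' u s"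
    and nc: "\<not> constr_term con s"
  shows "\<not> constr_term con s0"
proof (cases "\<exists>q. walk G u q = Some w")
  case True
  then obtain q where "walk G u q = Some w" by blast
  then have q: "valid_pos s0 q" "denotes G w (subt s0 q)" using denotes_walk[OF r0] by blast+
  then have "subt s0 q = subst \<sigma> l" using redex_vertex(2) denotes_functional by blast
  then show ?thesis using redex_vertex(3) constr_term_subt q(1) by metis
next
  case False
  then have "s = s0" using denotes_fire_unaffected[OF r0 u] r denotes_functional by blast
  then show ?thesis using nc by simp
qed

lemma inedges_fire_old_nonvalue:
  assumes u: "u \<in> verts G" and r0: "denotes G u s0" and nc0: "\<not> constr_term con s0"
  shows "inedges G' u \<subseteq> inedges G u"
proof (rule subrelI)
  fix v i assume e: "(v, i) \<in> inedges G' u"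
  then have i: "i < length (succ G' v)" "succ G' v ! i = u" by (auto simp: inedges_def)
  note ne = old_nonvalue_not_redirected[OF u r0 nc0]
  from inedge_source_cases[OF e] show "(v, i) \<in> inedges G u"
  proof
    assume v: "v \<in> verts G"
    then show ?thesis using succ_fire_old_cases[OF v i] ne by (auto simp: inedges_def)
  next
    assume "\<exists>q0. (True, q0) \<in> rhs_nodes l r \<and> v = \<iota> (True, q0)"
    then obtain q0 where "(True, q0) \<in> rhs_nodes l r" "v = \<iota> (True, q0)" by blast
    then have "(\<exists>x. x \<in> vars l \<and> u = a x) \<or> (u = \<iota> (True, q0 @ [i]) \<and> (True, q0 @ [i]) \<in> rhs_nodes l r)"
      using succ_fire_new_cases[of q0 i] i by auto
    then show ?thesis using ne u fresh_notin by blast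
  qed
qed

lemma inedges_fire_new:
  assumes q: "(True, q) \<in> rhs_nodes l r" and e: "(v, i) \<in> inedges G' (\<iota> (True, q))"
  shows "(q = [] \<and> (v, i) \<in> inedges G w) \<or>
    (\<exists>q0. q = q0 @ [i] \<and> v = \<iota> (True, q0) \<and> (True, q0) \<in> rhs_nodes l r)"
proof -
  have unv: "\<iota> (True, q) \<notin> verts G" using q fresh_notin by simp
  have i: "i < length (succ G' v)" "succ G' v ! i = \<iota> (True, q)" using e by (auto simp: inedges_def)
  from inedge_source_cases[OF e] show ?thesis
  proof
    assume v: "v \<in> verts G"
    note E = succ_fire_old_cases[OF v i]
    have "succ G v ! i \<in> verts G" using E verts_closed v by (meson nth_mem subsetD)
    then have wi: "succ G v ! i = w" and s': "\<iota> (True, q) = s'" using E unv by auto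
    then have "q = []" using contractum_root_fresh unv q iota_inj by metis
    then show ?thesis using v E wi by (auto simp: inedges_def)
  next
    assume "\<exists>q0. (True, q0) \<in> rhs_nodes l r \<and> v = \<iota> (True, q0)"
    then obtain q0 where q0: "(True, q0) \<in> rhs_nodes l r" "v = \<iota> (True, q0)" by blast
    then have "(\<exists>x. x \<in> vars l \<and> \<iota> (True, q) = a x) \<or>
        (\<iota> (True, q) = \<iota> (True, q0 @ [i]) \<and> (True, q0 @ [i]) \<in> rhs_nodes l r)"
      using succ_fire_new_cases[of q0 i] i by auto
    then have "q = q0 @ [i]" using unv var_vertex_avoids_redex q iota_inj by metis
    then show ?thesis using q0 by blast
  qed
qed

lemma nonvalues_unshared_fire: "nonvalues_unshared con G'"
  unfolding nonvalues_unshared_def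
proof (intro allI impI)
  fix u s v i
  assume uv: "u \<in> verts G'" and rs: "denotes G' u s" and nc: "\<not> constr_term con s"
    and e: "(v, i) \<in> inedges G' u"
  have uG: "nonvalues_unshared con G" using G_represents unfolding represents_def by blast
  have root': "root G' = (if root G = w then s' else root G)" using root_fire by (simp add: rd_def)
  from uv verts_fire_subset consider "u \<in> verts G"
    | q where "(True, q) \<in> rhs_nodes l r" "u = \<iota> (True, q)" by (force simp: rhs_nodes_def)
  then show "u \<noteq> root G' \<and> (\<forall>v' i'. (v', i') \<in> inedges G' u \<longrightarrow> v' = v \<and> i' = i)"
  proof cases
    case 1
    obtain s0 where r0: "denotes G u s0" using represents_verts_denote[OF G_represents 1] by blast
    note nc0 = nonvalue_fire_old_vertex[OF 1 r0 rs nc]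
    note sub = inedges_fire_old_nonvalue[OF 1 r0 nc0]
    have "u \<noteq> root G \<and> (\<forall>v' i'. (v', i') \<in> inedges G u \<longrightarrow> v' = v \<and> i' = i)"
      using uG 1 r0 nc0 sub e unfolding nonvalues_unshared_def by blast
    moreover have "u \<noteq> s'" using old_nonvalue_not_redirected[OF 1 r0 nc0] by blast
    ultimately show ?thesis using sub root' by auto
  next
    case (2 q)
    have unv: "u \<notin> verts G" using 2 fresh_notin by simp
    note cl = inedges_fire_new[OF 2(1), folded 2(2)]
    show ?thesis
    proof (cases "q = []")
      case True
      then have "(v, i) \<in> inedges G w" using cl[OF e] by auto
      then have U: "w \<noteq> root G \<and> (\<forall>v' i'. (v', i') \<in> inedges G w \<longrightarrow> v' = v \<and> i' = i)"
        using uG redex_vertex unfolding nonvalues_unshared_def by blast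
      then have "u \<noteq> root G'" using root' unv root_in_verts by auto
      then show ?thesis using cl U True by blast
    next
      case False
      obtain q0 where q0: "q = q0 @ [i]" "v = \<iota> (True, q0)" using cl[OF e] False by blast
      have "u \<noteq> s'" using contractum_root_fresh unv 2 iota_inj False by metis
      then have "u \<noteq> root G'" using root' unv root_in_verts by auto
      moreover have "\<forall>v' i'. (v', i') \<in> inedges G' u \<longrightarrow> v' = v \<and> i' = i"
        using cl False q0 by fastforce
      ultimately show ?thesis by blast
    qed
  qed
qed

lemma represents_fire: "represents con G' (replace t p (subst \<sigma> r))" if "walk G (root G) p = Some w"
  using fire_redex_position[OF that] finite_verts_fire verts_fire nonvalues_unshared_fire
  by (simp add: represents_def)

end

lemma verts_graph_of: "verts (graph_of t) = to_nat ` poss t"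
  by (simp add: graph_of_def)

lemma root_graph_of: "root (graph_of t) = to_nat ([] :: nat list)"
  by (simp add: graph_of_def)

lemma succ_graph_of: "q \<in> poss t \<Longrightarrow> succ (graph_of t) (to_nat q) =
   (case subt t q of Fun f ts \<Rightarrow> map (\<lambda>i. to_nat (q @ [i])) [0..<length ts] | Var x \<Rightarrow> [])"
  by (simp add: graph_of_def split: trm.splits)

lemma lab_graph_of: "q \<in> poss t \<Longrightarrow> lab (graph_of t) (to_nat q) =
    (case subt t q of Fun f ts \<Rightarrow> Some f | Var x \<Rightarrow> None)"
  by (simp add: graph_of_def split: trm.splits)

lemma varof_graph_of: "q \<in> poss t \<Longrightarrow> varof (graph_of t) (to_nat q) =
    (case subt t q of Fun f ts \<Rightarrow> None | Var x \<Rightarrow> Some x)"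
  by (simp add: graph_of_def split: trm.splits)

lemma graph_of_denotes_subt: "q \<in> poss t \<Longrightarrow> denotes (graph_of t) (to_nat q) (subt t q)"
proof (induction "subt t q" arbitrary: q)
  case (Var x)
  then show ?case
    by (auto intro!: denotes.denotes_Var simp: succ_graph_of lab_graph_of varof_graph_of
      simp flip: Var(1))
next
  case (Fun f ts)
  then have "denotes (graph_of t) (to_nat (q @ [i])) (ts ! i)" if "i < length ts" for i
    using poss_snoc_Fun[OF Fun(3) Fun(2)[symmetric] that] Fun(1)[of "q @ [i]"] that
    by (simp add: nth_mem)
  then show ?case
    using Fun(2,3)
    by (auto intro!: denotes.denotes_Fun simp: succ_graph_of lab_graph_of simp flip: Fun(2))
qed

lemma walk_graph_of: "q0 @ q \<in> poss t \<Longrightarrow> walk (graph_of t) (to_nat q0) q = Some (to_nat (q0 @ q))"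
proof (induction q arbitrary: q0)
  case Nil
  then show ?case by simp
next
  case (Cons i q)
  have "valid_pos t ((q0 @ [i]) @ q)" using Cons.prems by (simp add: poss_def)
  then have vi: "valid_pos t (q0 @ [i])" using valid_pos_append by blast
  then obtain g ts where gt: "subt t q0 = Fun g ts" "i < length ts" using subt_snoc by blast
  have q0: "q0 \<in> poss t" using vi valid_pos_append by (auto simp: poss_def)
  have "walk (graph_of t) (to_nat (q0 @ [i])) q = Some (to_nat ((q0 @ [i]) @ q))"
    using Cons.IH[of "q0 @ [i]"] Cons.prems by simp
  then show ?case using succ_graph_of[OF q0] gt by simp
qed

lemma inedges_graph_of: "(v, i) \<in> inedges (graph_of t) u \<Longrightarrow>
    \<exists>q0. v = to_nat q0 \<and> q0 \<in> poss t \<and> u = to_nat (q0 @ [i])"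
proof -
  assume "(v, i) \<in> inedges (graph_of t) u"
  then obtain q0 where q0: "q0 \<in> poss t" "v = to_nat q0" and i: "i < length (succ (graph_of t) v)"
    and u: "succ (graph_of t) v ! i = u" by (auto simp: inedges_def verts_graph_of)
  show ?thesis
  proof (cases "subt t q0")
    case (Var x)
    then show ?thesis using i q0 succ_graph_of[OF q0(1)] by simp
  next
    case (Fun g ts)
    then show ?thesis using i u q0 succ_graph_of[OF q0(1)] by auto
  qed
qed

lemma reach_graph_of: "reach (succ (graph_of t)) (root (graph_of t)) = verts (graph_of t)"
proof
  show "verts (graph_of t) \<subseteq> reach (succ (graph_of t)) (root (graph_of t))"
  proof
    fix u assume "u \<in> verts (graph_of t)"
    then obtain q where "q \<in> poss t" "u = to_nat q" by (auto simp: verts_graph_of)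
    then have "walk (graph_of t) (to_nat ([] :: nat list)) q = Some u"
      using walk_graph_of[of "[]" q t] by simp
    then show "u \<in> reach (succ (graph_of t)) (root (graph_of t))"
      unfolding reach_iff_walk root_graph_of by blast
  qed
  show "reach (succ (graph_of t)) (root (graph_of t)) \<subseteq> verts (graph_of t)"
  proof
    fix u assume "u \<in> reach (succ (graph_of t)) (root (graph_of t))"
    then have "(root (graph_of t), u) \<in> (edges (succ (graph_of t)))\<^sup>*" by (simp add: reach_def)
    then show "u \<in> verts (graph_of t)"
    proof (induction rule: rtrancl_induct)
      case base
      then show ?case by (auto simp: verts_graph_of root_graph_of poss_def)
    next
      case (step b c)
      then have c: "c \<in> set (succ (graph_of t) b)" by (simp add: edges_def)
      then obtain i where i: "i < length (succ (graph_of t) b)" "succ (graph_of t) b ! i = c"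
        by (auto simp: in_set_conv_nth)
      then have "(b, i) \<in> inedges (graph_of t) c" using step(3) by (auto simp: inedges_def)
      then obtain q0 where "q0 \<in> poss t" "b = to_nat q0" "c = to_nat (q0 @ [i])"
        using inedges_graph_of by blast
      then have "q0 @ [i] \<in> poss t" using i succ_graph_of[of q0 t]
        by (cases "subt t q0") (auto simp: poss_def valid_pos_append)
      then show ?case using \<open>c = to_nat (q0 @ [i])\<close> by (simp add: verts_graph_of)
    qed
  qed
qed

lemma nonvalues_unshared_graph_of: "nonvalues_unshared con (graph_of t)"
  unfolding nonvalues_unshared_def
proof (intro allI impI)
  fix u s v i assume "(v, i) \<in> inedges (graph_of t) u"
  then obtain q0 where q0: "v = to_nat q0" "u = to_nat (q0 @ [i])" using inedges_graph_of by blast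
  have "u \<noteq> root (graph_of t)" using q0 by (simp add: root_graph_of)
  moreover have "v' = v \<and> i' = i" if "(v', i') \<in> inedges (graph_of t) u" for v' i'
    using inedges_graph_of[OF that] q0 by auto
  ultimately show "u \<noteq> root (graph_of t) \<and> (\<forall>v' i'. (v', i') \<in> inedges (graph_of t) u \<longrightarrow> v' = v \<and> i' = i)"
    by blast
qed

lemma graph_of_represents: "represents con (graph_of t) t"
  unfolding represents_def
proof (intro conjI)
  show "finite (verts (graph_of t))" unfolding verts_graph_of by (rule finite_imageI[OF finite_poss])
  show "denotes (graph_of t) (root (graph_of t)) t"
    using graph_of_denotes_subt[of "[]" t] by (simp add: root_graph_of poss_def)
qed (simp_all add: reach_graph_of nonvalues_unshared_graph_of)

section \<open>Simulation of rewrite steps\<close>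

definition walk_hom :: "('f, 'x) tgraph \<Rightarrow> nat \<Rightarrow> bool \<times> nat list \<Rightarrow> nat" where
  "walk_hom G w y = the (walk G w (snd y))"

lemma walk_hom_denotes:
  assumes g: "represents con G t" and wv: "w \<in> verts G" and rw: "denotes G w (subst \<sigma> l)"
    and q: "q \<in> poss l"
  shows "walk G w q = Some (walk_hom G w (False, q)) \<and> walk_hom G w (False, q) \<in> verts G \<and>
    denotes G (walk_hom G w (False, q)) (subst \<sigma> (subt l q))"
proof -
  have "valid_pos (subst \<sigma> l) q" "subt (subst \<sigma> l) q = subst \<sigma> (subt l q)"
    using subt_subst q by (auto simp: poss_def)
  moreover obtain u where u: "walk G w q = Some u"
    using denotes_walk_exists[OF rw] calculation(1) by blast
  ultimately show ?thesis
    using denotes_walk[OF rw u] represents_walk_closed[OF g wv u] by (simp add: walk_hom_def)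
qed

lemma is_redex_walk_hom:
  assumes g: "represents con G t" and wv: "w \<in> verts G" and rw: "denotes G w (subst \<sigma> l)"
    and cs: "\<forall>x\<in>vars l. constr_term con (\<sigma> x)"
  shows "is_redex con (rule_graph l r) (walk_hom G w) G"
proof -
  let ?\<phi> = "walk_hom G w"
  note key = walk_hom_denotes[OF g wv rw]
  have lab_succ: "lab G (?\<phi> (False, q)) = Some f \<and>
      succ G (?\<phi> (False, q)) = map ?\<phi> (gsucc (rule_graph l r) (False, q))"
    if q: "q \<in> poss l" and s: "subt l q = Fun f ts" for q f ts
  proof -
    note K = key[OF q]
    have D: "lab G (?\<phi> (False, q)) = Some f" "length ts = length (succ G (?\<phi> (False, q)))"
      using denotes_FunD[of G "?\<phi> (False, q)" f "map (subst \<sigma>) ts"] K s by auto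
    have "succ G (?\<phi> (False, q)) = map ?\<phi> (gsucc (rule_graph l r) (False, q))"
    proof (rule nth_equalityI)
      fix i assume "i < length (succ G (?\<phi> (False, q)))"
      then have i: "i < length ts" "i < length (succ G (?\<phi> (False, q)))" using D by simp_all
      have "walk G w (q @ [i]) = Some (succ G (?\<phi> (False, q)) ! i)"
        using K i(2) walk_append_Some[of G w q _ "[i]"] by simp
      moreover have "q @ [i] \<in> poss l" using q s i by (simp add: valid_pos_append poss_def)
      ultimately have "?\<phi> (False, q @ [i]) = succ G (?\<phi> (False, q)) ! i" using key by fastforce
      then show "succ G (?\<phi> (False, q)) ! i = map ?\<phi> (gsucc (rule_graph l r) (False, q)) ! i"
        using s i by (simp add: rule_graph_gsucc_False)
    qed (use D s in \<open>simp add: rule_graph_gsucc_False\<close>)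
    then show ?thesis using D by simp
  qed
  have constructor_paths: "\<forall>vs. is_path G vs \<and> hd vs = ?\<phi> (False, q) \<longrightarrow> constructor_path con G vs"
    if q: "q \<in> poss l" and s: "subt l q = Var x" for q x
  proof -
    have "x \<in> vars l" using pos_imp_vars q s by (auto simp: poss_def)
    moreover have "denotes G (?\<phi> (False, q)) (\<sigma> x)" using key[OF q] s by simp
    ultimately show ?thesis using constructor_path_if_constr_term cs by blast
  qed
  have "\<forall>v\<in>{(False, q) |q. q \<in> poss l}. ?\<phi> v \<in> verts G \<and>
    (\<forall>f. glab (rule_graph l r) v = Some f \<longrightarrow>
       lab G (?\<phi> v) = Some f \<and> succ G (?\<phi> v) = map ?\<phi> (gsucc (rule_graph l r) v)) \<and>
    (glab (rule_graph l r) v = None \<longrightarrow>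
       (\<forall>vs. is_path G vs \<and> hd vs = ?\<phi> v \<longrightarrow> constructor_path con G vs))"
    (is "\<forall>v\<in>_. ?P v")
  proof
    fix v assume "v \<in> {(False, q) |q. q \<in> poss l}"
    then obtain q where v: "v = (False, q)" and q: "q \<in> poss l" by blast
    show "?P v"
      using key[OF q] lab_succ[OF q] constructor_paths[OF q] v
      by (cases "subt l q") (auto simp: rule_graph_glab_False)
  qed
  then show ?thesis
    unfolding is_redex_def reach_rule_graph_lhs rule_graph_roots by blast
qed

lemma cbv_step_simulated:
  assumes g: "represents con G t" and trs: "constructor_trs con ar R" and st: "cbv_step con R t t'"
  shows "\<exists>G'. gstep con R G G' \<and> represents con G' t'"
proof -
  obtain l r p \<sigma> where lr: "(l, r) \<in> R" and p: "p \<in> poss t"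
    and cs: "\<forall>x\<in>vars l. constr_term con (\<sigma> x)" and sp: "subt t p = subst \<sigma> l"
    and t': "t' = replace t p (subst \<sigma> r)"
    using st unfolding cbv_step_def by blast
  have rt: "denotes G (root G) t" using g by (simp add: represents_def)
  obtain w where pw: "walk G (root G) p = Some w"
    using denotes_walk_exists[OF rt] p by (auto simp: poss_def)
  have rw: "denotes G w (subst \<sigma> l)" using represents_walk_denotes[OF g pw] sp by simp
  have wv: "w \<in> verts G" using represents_walk_verts[OF g pw] .
  note key = walk_hom_denotes[OF g wv rw]
  note rx = is_redex_walk_hom[OF g wv rw cs, of r]
  obtain \<iota> where fr: "fresh_for (rule_graph l r) \<iota> G"
    using fresh_for_exists g unfolding represents_def by blast
  interpret F: redex_firing con G t l r "walk_hom G w" \<iota>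
    using g constructor_trs_rule[OF trs lr] rx fr by unfold_locales auto
  have "F.w = w" using key[of "[]"] by (simp add: F.w_def poss_def)
  then have G'g: "represents con F.G' (replace t p (subst F.\<sigma> r))" using F.represents_fire pw by simp
  have "subst F.\<sigma> r = subst \<sigma> r"
  proof (rule subst_cong, rule ballI)
    fix x assume "x \<in> vars r"
    then have x: "x \<in> vars l" using constructor_trs_rule[OF trs lr] by blast
    have vp: "varpos l x \<in> poss l" "subt l (varpos l x) = Var x" using subt_varpos[OF x] by auto
    have "denotes G (F.a x) (\<sigma> x)" using key[OF vp(1)] vp(2) by (simp add: F.a_def)
    then show "F.\<sigma> x = \<sigma> x" using F.sigma_denotes[OF x] denotes_functional by blast
  qed
  then have "represents con F.G' t'" using G'g t' by simp
  moreover have "gstep con R G F.G'" unfolding gstep_def F.G'_def using lr rx fr by blast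
  ultimately show ?thesis by blast
qed

lemma gstep_simulated:
  assumes g: "represents con G t" and trs: "constructor_trs con ar R" and st: "gstep con R G G'"
  shows "\<exists>t'. cbv_step con R t t' \<and> represents con G' t'"
proof -
  obtain l r \<phi> \<iota> where lr: "(l, r) \<in> R" and rx: "is_redex con (rule_graph l r) \<phi> G"
    and fr: "fresh_for (rule_graph l r) \<iota> G" and G': "G' = fire (rule_graph l r) \<phi> \<iota> G"
    using st unfolding gstep_def by blast
  interpret F: redex_firing con G t l r \<phi> \<iota>
    using g constructor_trs_rule[OF trs lr] rx fr by unfold_locales auto
  obtain p where p: "walk G (root G) p = Some F.w"
    using represents_verts_walk[OF g F.redex_vertex(1)] by blast
  note M = F.fire_redex_position[OF p]
  have "cbv_step con R t (replace t p (subst F.\<sigma> r))"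
    unfolding cbv_step_def
    by (intro exI[of _ l] exI[of _ r] exI[of _ p] exI[of _ F.\<sigma>])
      (use lr M F.sigma_denotes in \<open>auto simp: poss_def\<close>)
  moreover have "represents con G' (replace t p (subst F.\<sigma> r))"
    using F.represents_fire[OF p] G' by (simp add: F.G'_def)
  ultimately show ?thesis by blast
qed

text \<open>Fresh vertices for the built part always exist, so a redex can always be fired.\<close>
lemma graph_NF_iff_no_gstep:
  assumes "finite (verts G)"
  shows "graph_NF con R G \<longleftrightarrow> \<not> (\<exists>G'. gstep con R G G')"
  using fresh_for_exists[OF assms] unfolding graph_NF_def gstep_def by blast

lemma graph_NF_iff_term_NF:
  assumes g: "represents con G t" and trs: "constructor_trs con ar R"
  shows "graph_NF con R G \<longleftrightarrow> term_NF con R t"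
proof -
  have "finite (verts G)" using g unfolding represents_def by blast
  moreover have "(\<exists>G'. gstep con R G G') \<longleftrightarrow> (\<exists>t'. cbv_step con R t t')"
  proof
    assume "\<exists>G'. gstep con R G G'"
    then show "\<exists>t'. cbv_step con R t t'" using gstep_simulated[OF g trs] by blast
  next
    assume "\<exists>t'. cbv_step con R t t'"
    then show "\<exists>G'. gstep con R G G'" using cbv_step_simulated[OF g trs] by blast
  qed
  ultimately show ?thesis unfolding term_NF_def by (simp add: graph_NF_iff_no_gstep)
qed

lemma relpowp_gstep_iff_cbv_step:
  assumes trs: "constructor_trs con ar R" and "represents con G t"
  shows "((cbv_step con R ^^ n) t u \<and> term_NF con R u) \<longleftrightarrow>
         (\<exists>G'. (gstep con R ^^ n) G G' \<and> graph_NF con R G' \<and> term_of G' = u)"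
  using assms(2)
proof (induction n arbitrary: G t)
  case 0
  then show ?case using graph_NF_iff_term_NF[OF 0 trs] term_of_represents[OF 0] by auto
next
  case (Suc n)
  show ?case
  proof
    assume "(cbv_step con R ^^ Suc n) t u \<and> term_NF con R u"
    then obtain t1 where s1: "cbv_step con R t t1"
      and rest: "(cbv_step con R ^^ n) t1 u \<and> term_NF con R u"
      using relpowp_Suc_D2[of n "cbv_step con R" t u] by blast
    obtain G1 where "gstep con R G G1" "represents con G1 t1"
      using cbv_step_simulated[OF Suc.prems trs s1] by blast
    then show "\<exists>G'. (gstep con R ^^ Suc n) G G' \<and> graph_NF con R G' \<and> term_of G' = u"
      using Suc.IH rest relpowp_Suc_I2[of "gstep con R" G G1 n] by blast
  next
    assume "\<exists>G'. (gstep con R ^^ Suc n) G G' \<and> graph_NF con R G' \<and> term_of G' = u"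
    then obtain G1 G' where s1: "gstep con R G G1"
      and rest: "(gstep con R ^^ n) G1 G' \<and> graph_NF con R G' \<and> term_of G' = u"
      using relpowp_Suc_D2[of n "gstep con R" G] by blast
    obtain t1 where "cbv_step con R t t1" "represents con G1 t1"
      using gstep_simulated[OF Suc.prems trs s1] by blast
    then show "(cbv_step con R ^^ Suc n) t u \<and> term_NF con R u"
      using Suc.IH rest relpowp_Suc_I2[of "cbv_step con R" t t1 n] by blast
  qed
qed

theorem theorem3:
  fixes con :: "'f \<Rightarrow> bool" and ar :: "'f \<Rightarrow> nat"
    and R :: "(('f, 'x) trm \<times> ('f, 'x) trm) set"
    and t u :: "('f, 'x) trm" and n :: nat
  assumes "constructor_trs con ar R"
    and "wf_trm ar t"
  shows "((cbv_step con R ^^ n) t u \<and> term_NF con R u) \<longleftrightarrow>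
         (\<exists>G. (gstep con R ^^ n) (graph_of t) G \<and> graph_NF con R G \<and> term_of G = u)"
  using relpowp_gstep_iff_cbv_step[OF assms(1) graph_of_represents] .

end
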